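(* Let $G$ be a countable group that is not locally finite. Then for every $n\ge1$ there is a fair polytile $(T_1,\dots,T_k)$ of $G$ with $|T_1|=n$. Furthermore, if $F\subseteq G$ is finite then for all sufficiently large $n$ there is a fair polytile $(T_1,\dots,T_k)$ of $G$ with $F\subseteq T_1$ and $|T_1|=n$.
   Context: A group is locally finite if every finite subset generates a finite subgroup. For a countable group $G$, a tuple $(T_1,\dots,T_k)$ of finite subsets of $G$, each containing $1_G$, is a polytile if there are non-empty sets $\Delta_1,\dots,\Delta_k\subseteq G$ such that $G$ is the disjoint union $\coprod_{1\le i\le k,\ \delta\in\Delta_i}\delta T_i$. It is fair if all $T_i$ have the same cardinality. *)

theory Defs
  imports "HOL-Algebra.Algebra" "HOL-Library.Countable_Set"
begin

definition locally_finite_group :: "('a, 'b) monoid_scheme \<Rightarrow> bool" where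
  "locally_finite_group G \<longleftrightarrow>
     (\<forall>S. S \<subseteq> carrier G \<and> finite S \<longrightarrow> finite (generate G S))"

text \<open>A tuple (T_1,...,T_k) is represented as a list Ts = [T_1,...,T_k] (T_1 = Ts!0).\<close>
definition polytile :: "('a, 'b) monoid_scheme \<Rightarrow> 'a set list \<Rightarrow> bool" where
  "polytile G Ts \<longleftrightarrow>
     Ts \<noteq> [] \<and>
     (\<forall>T\<in>set Ts. finite T \<and> T \<subseteq> carrier G \<and> \<one>\<^bsub>G\<^esub> \<in> T) \<and>
     (\<exists>\<Delta> :: nat \<Rightarrow> 'a set.
        (\<forall>i<length Ts. \<Delta> i \<noteq> {} \<and> \<Delta> i \<subseteq> carrier G) \<and>
        (\<Union>i<length Ts. \<Union>\<delta>\<in>\<Delta> i. l_coset G \<delta> (Ts ! i)) = carrier G \<and>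
        (\<forall>i<length Ts. \<forall>j<length Ts. \<forall>\<delta>\<in>\<Delta> i. \<forall>\<delta>'\<in>\<Delta> j.
            (i, \<delta>) \<noteq> (j, \<delta>') \<longrightarrow>
            l_coset G \<delta> (Ts ! i) \<inter> l_coset G \<delta>' (Ts ! j) = {}))"

definition fair :: "'a set list \<Rightarrow> bool" where
  "fair Ts \<longleftrightarrow> (\<forall>T\<in>set Ts. \<forall>T'\<in>set Ts. card T = card T')"

end

theory Submission
  imports Defs "HOL-Library.Disjoint_Sets"
begin


lemma sum_lessThan_add_diff_le:
  fixes a :: "nat \<Rightarrow> nat"
  assumes "\<And>k. 1 \<le> a k" and "i \<le> j"
  shows "(\<Sum>k<i. a k) + (j - i) \<le> (\<Sum>k<j. a k)"
proof -
  have "j - i = (\<Sum>k=i..<j. 1)" by simp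
  also have "\<dots> \<le> (\<Sum>k=i..<j. a k)" using assms(1) by (rule sum_mono)
  finally have "(\<Sum>k<i. a k) + (j - i) \<le> (\<Sum>k=0..<i. a k) + (\<Sum>k=i..<j. a k)"
    by (simp add: atLeast0LessThan)
  also have "\<dots> = (\<Sum>k<j. a k)"
    using sum.atLeastLessThan_concat[of 0 i j a] assms(2) by (simp add: atLeast0LessThan)
  finally show ?thesis .
qed

lemma enumerate_UN_in_order:
  fixes A :: "nat \<Rightarrow> 'a set"
  assumes fin: "\<And>i. finite (A i)" and ne: "\<And>i. A i \<noteq> {}"
    and dj: "\<And>i j. i \<noteq> j \<Longrightarrow> A i \<inter> A j = {}"
  obtains g where "bij_betw g (\<Union>i. A i) UNIV"
    and "\<And>i y. y \<in> A i \<Longrightarrow> (\<Sum>k<i. card (A k)) \<le> g y \<and> g y < (\<Sum>k<Suc i. card (A k))"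
proof -
  define s where "s i = (\<Sum>k<i. card (A k))" for i
  have s_Suc: "s (Suc i) = s i + card (A i)" for i by (simp add: s_def)
  have s_gap: "s i + (j - i) \<le> s j" if "i \<le> j" for i j
    unfolding s_def using fin ne that by (intro sum_lessThan_add_diff_le) (simp_all add: Suc_leI card_gt_0_iff)
  have "\<forall>i. \<exists>f. bij_betw f (A i) {s i..<s (Suc i)}"
    using fin s_Suc by (intro allI finite_same_card_bij) auto
  then obtain f where f: "\<And>i. bij_betw (f i) (A i) {s i..<s (Suc i)}" by metis
  define idx where "idx y = (THE i. y \<in> A i)" for y
  have idx: "idx y = i" if "y \<in> A i" for y i
    unfolding idx_def using that dj by (intro the_equality) auto
  define g where "g y = f (idx y) y" for y
  have g_in: "s i \<le> g y \<and> g y < s (Suc i)" if "y \<in> A i" for y i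
    using f[of i] that idx[OF that] unfolding g_def bij_betw_def by auto
  have "inj_on g (\<Union>i. A i)"
  proof (rule inj_onI)
    fix x y assume "x \<in> (\<Union>i. A i)" "y \<in> (\<Union>i. A i)" and e: "g x = g y"
    then obtain i j where i: "x \<in> A i" and j: "y \<in> A j" by auto
    have "\<not> i < j" and "\<not> j < i"
      using g_in[OF i] g_in[OF j] e s_gap[of "Suc i" j] s_gap[of "Suc j" i] by auto
    then have "i = j" by simp
    then show "x = y"
      using f[of i] i j e idx[OF i] idx[OF j] unfolding g_def bij_betw_def inj_on_def by auto
  qed
  moreover have "m \<in> g ` (\<Union>i. A i)" for m
  proof -
    have "s 0 = 0" by (simp add: s_def)
    then have ex: "\<exists>i. m < s (Suc i)" using s_gap[of 0 "Suc m"] by (intro exI[of _ m]) simp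
    define i where "i = (LEAST i. m < s (Suc i))"
    have "m < s (Suc i)" unfolding i_def by (rule LeastI_ex[OF ex])
    moreover have "s i \<le> m"
    proof (cases i)
      case (Suc i')
      then have "\<not> m < s (Suc i')" using not_less_Least[of i' "\<lambda>i. m < s (Suc i)"] i_def by simp
      then show ?thesis using Suc by simp
    qed (simp add: s_def)
    ultimately have "m \<in> f i ` A i" using f[of i] unfolding bij_betw_def by simp
    then obtain y where y: "y \<in> A i" "f i y = m" by blast
    then show ?thesis using idx[OF y(1)] unfolding g_def by force
  qed
  ultimately have "bij_betw g (\<Union>i. A i) UNIV" unfolding bij_betw_def by auto
  then show ?thesis using that g_in unfolding s_def by blast
qed

definition windowed_partition :: "nat \<Rightarrow> (nat \<Rightarrow> 'a set) \<Rightarrow> 'a set set \<Rightarrow> bool" where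
  "windowed_partition n A P \<longleftrightarrow> disjoint P \<and> \<Union>P = (\<Union>i. A i) \<and>
     (\<forall>B\<in>P. card B = n \<and> (\<exists>i. B \<subseteq> (\<Union>k\<in>{i..i+n}. A k))) \<and>
     (card (A 0) \<le> n \<longrightarrow> (\<exists>B\<in>P. A 0 \<subseteq> B))"

lemma div_eq_iff_interval: "0 < n \<Longrightarrow> x div n = m \<longleftrightarrow> x \<in> {m * n..<m * n + n}" for x n m :: nat
proof
  assume "0 < n" "x div n = m"
  then show "x \<in> {m * n..<m * n + n}" using dividend_less_div_times[of n x] by auto
qed (auto intro: div_nat_eqI simp: mult.commute)

lemma bij_betw_preimage:
  assumes "bij_betw g A B" "C \<subseteq> B"
  shows "bij_betw g {y \<in> A. g y \<in> C} C"
  unfolding bij_betw_def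
proof
  show "inj_on g {y \<in> A. g y \<in> C}" using assms(1) unfolding bij_betw_def by (auto intro: inj_on_subset)
  show "g ` {y \<in> A. g y \<in> C} = C" using assms unfolding bij_betw_def by blast
qed

lemma windowed_partition_exists:
  fixes A :: "nat \<Rightarrow> 'a set"
  assumes n: "1 \<le> n" and fin: "\<And>i. finite (A i)" and ne: "\<And>i. A i \<noteq> {}"
    and dj: "\<And>i j. i \<noteq> j \<Longrightarrow> A i \<inter> A j = {}"
  shows "\<exists>P. windowed_partition n A P"
proof -
  define s where "s i = (\<Sum>k<i. card (A k))" for i
  obtain g where g: "bij_betw g (\<Union>i. A i) UNIV"
    and g_in: "\<And>i y. y \<in> A i \<Longrightarrow> s i \<le> g y \<and> g y < s (Suc i)"
    using enumerate_UN_in_order[of A, OF fin ne dj] unfolding s_def by blast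
  have s_gap: "s i + (j - i) \<le> s j" if "i \<le> j" for i j
    unfolding s_def using fin ne that by (intro sum_lessThan_add_diff_le) (simp_all add: Suc_leI card_gt_0_iff)
  define blk where "blk m = {y \<in> (\<Union>i. A i). g y \<in> {m * n..<m * n + n}}" for m
  have blk_div: "y \<in> blk m \<longleftrightarrow> y \<in> (\<Union>i. A i) \<and> g y div n = m" for y m
    unfolding blk_def using div_eq_iff_interval n by simp
  have card_blk: "card (blk m) = n" for m
    using bij_betw_same_card[OF bij_betw_preimage[OF g subset_UNIV, of "{m * n..<m * n + n}"]]
    unfolding blk_def by simp
  have window: "k' \<le> k + n" if "y \<in> A k" "y' \<in> A k'" "y \<in> blk m" "y' \<in> blk m" for y y' k k' m
  proof (cases "k < k'")
    case True
    have "m * n \<le> g y" "g y' < m * n + n" using that(3,4) unfolding blk_def by auto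
    then show ?thesis using g_in[OF that(1)] g_in[OF that(2)] s_gap[of "Suc k" k'] True by linarith
  qed simp
  show ?thesis unfolding windowed_partition_def
  proof (intro exI[of _ "range blk"] conjI ballI impI)
    fix B assume "B \<in> range blk"
    then obtain m where B: "B = blk m" by auto
    show "card B = n" using B card_blk by simp
    then have "B \<noteq> {}" using n by auto
    then have ex: "\<exists>i. A i \<inter> B \<noteq> {}" using B blk_def by auto
    define i where "i = (LEAST i. A i \<inter> B \<noteq> {})"
    obtain y0 where y0: "y0 \<in> A i" "y0 \<in> B" using LeastI_ex[OF ex] unfolding i_def by blast
    show "\<exists>i. B \<subseteq> (\<Union>k\<in>{i..i + n}. A k)"
    proof (intro exI[of _ i] subsetI)
      fix y assume y: "y \<in> B"
      then obtain k where k: "y \<in> A k" using B blk_def by auto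
      have "i \<le> k" using k y Least_le[of "\<lambda>i. A i \<inter> B \<noteq> {}" k] unfolding i_def by blast
      moreover have "k \<le> i + n" using window[OF y0(1) k] y0(2) y B by simp
      ultimately show "y \<in> (\<Union>k\<in>{i..i + n}. A k)" using k by auto
    qed
  next
    show "disjoint (range blk)" unfolding disjoint_def by (auto simp: blk_div)
    show "\<Union>(range blk) = (\<Union>i. A i)" by (auto simp: blk_div)
  next
    assume "card (A 0) \<le> n"
    then have "g y < n" if "y \<in> A 0" for y using g_in[OF that] by (simp add: s_def)
    then have "A 0 \<subseteq> blk 0" unfolding blk_def by auto
    then show "\<exists>B\<in>range blk. A 0 \<subseteq> B" by auto
  qed
qed

lemma exists_upper_subset:
  fixes f :: "'a \<Rightarrow> nat"
  assumes "finite A" and "n \<le> card A"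
  shows "\<exists>P\<subseteq>A. card P = n \<and> (\<forall>y\<in>P. \<forall>z\<in>A. f y < f z \<longrightarrow> z \<in> P)"
  using assms
proof (induction "card A" arbitrary: A rule: less_induct)
  case less
  show ?case
  proof (cases "card A = n")
    case False
    then have "A \<noteq> {}" using less.prems by auto
    then have "Min (f ` A) \<in> f ` A" using less.prems(1) by simp
    then obtain m where m: "m \<in> A" "f m = Min (f ` A)" by auto
    have mmin: "f m \<le> f z" if "z \<in> A" for z using that less.prems(1) m by simp
    have "card (A - {m}) < card A" using m(1) less.prems(1) by (meson card_Diff1_less)
    moreover have "n \<le> card (A - {m})" using False m less.prems by simp
    ultimately obtain P where P: "P \<subseteq> A - {m}" "card P = n"
      "\<forall>y\<in>P. \<forall>z\<in>A - {m}. f y < f z \<longrightarrow> z \<in> P"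
      using less.hyps[of "A - {m}"] less.prems(1) by blast
    have "z \<in> P" if "y \<in> P" "z \<in> A" "f y < f z" for y z
    proof -
      have "z \<noteq> m" using mmin[of y] P(1) that by auto
      then show ?thesis using P(3) that by blast
    qed
    then show ?thesis using P(1,2) by blast
  qed auto
qed

lemma funpow_add_apply: "(f ^^ (m + n)) x = (f ^^ m) ((f ^^ n) x)"
  by (simp add: funpow_add)

lemma finite_disjoint_meeting:
  assumes "disjoint P" "finite Z"
  shows "finite {B \<in> P. B \<inter> Z \<noteq> {}}"
proof -
  define f where "f B = (SOME z. z \<in> B \<inter> Z)" for B
  have f: "f B \<in> B \<inter> Z" if "B \<inter> Z \<noteq> {}" for B
    unfolding f_def by (rule someI_ex) (use that in blast)
  have "inj_on f {B \<in> P. B \<inter> Z \<noteq> {}}"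
  proof (rule inj_onI)
    fix B B' assume B: "B \<in> {B \<in> P. B \<inter> Z \<noteq> {}}" and B': "B' \<in> {B \<in> P. B \<inter> Z \<noteq> {}}"
      and "f B = f B'"
    then have "f B \<in> B \<inter> B'" using f[of B] f[of B'] by auto
    then show "B = B'" using assms(1) B B' unfolding disjoint_def by blast
  qed
  moreover have "f ` {B \<in> P. B \<inter> Z \<noteq> {}} \<subseteq> Z" using f by auto
  ultimately show ?thesis using assms(2) inj_on_finite by blast
qed

locale rooted_forest =
  fixes V Q :: "'a set" and p :: "'a \<Rightarrow> 'a" and depth :: "'a \<Rightarrow> nat"
  assumes parent_in: "x \<in> V \<Longrightarrow> p x \<in> V"
    and roots_subset: "Q \<subseteq> V" and finite_roots: "finite Q"
    and parent_root: "x \<in> Q \<Longrightarrow> p x = x"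
    and depth_eq_0_iff: "x \<in> V \<Longrightarrow> depth x = 0 \<longleftrightarrow> x \<in> Q"
    and depth_parent: "x \<in> V \<Longrightarrow> x \<notin> Q \<Longrightarrow> Suc (depth (p x)) = depth x"
    and finite_fibre: "v \<in> V \<Longrightarrow> finite {x \<in> V. p x = v}"
    and infinite_vertices: "infinite V"
begin

lemma iter_parent_in: "x \<in> V \<Longrightarrow> (p^^k) x \<in> V"
  by (induction k) (auto intro: parent_in)

lemma iter_parent_root: "x \<in> Q \<Longrightarrow> (p^^k) x = x"
  by (induction k) (auto simp: parent_root)

lemma depth_iter_parent: "x \<in> V \<Longrightarrow> depth ((p^^k) x) = depth x - k"
proof (induction k)
  case (Suc k)
  define z where "z = (p^^k) x"
  have z: "z \<in> V" using iter_parent_in Suc.prems z_def by simp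
  show ?case
  proof (cases "z \<in> Q")
    case True
    then show ?thesis using depth_eq_0_iff[OF z] parent_root Suc z_def by simp
  next
    case False
    then show ?thesis using depth_parent[OF z False] Suc z_def by simp
  qed
qed simp

lemma iter_parent_in_roots: "x \<in> V \<Longrightarrow> depth x \<le> k \<Longrightarrow> (p^^k) x \<in> Q"
  using depth_iter_parent[of x k] depth_eq_0_iff[OF iter_parent_in[of x k]] by simp

definition subtree :: "'a \<Rightarrow> 'a set" where
  "subtree v = {y \<in> V. \<exists>k. (p^^k) y = v}"

lemma subtree_iff:
  assumes "v \<in> V"
  shows "y \<in> subtree v \<longleftrightarrow> y \<in> V \<and> depth v \<le> depth y \<and> (p^^(depth y - depth v)) y = v"
proof
  assume "y \<in> subtree v"
  then obtain k where y: "y \<in> V" and k: "(p^^k) y = v" unfolding subtree_def by auto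
  have dv: "depth v = depth y - k" using depth_iter_parent[OF y, of k] k by simp
  show "y \<in> V \<and> depth v \<le> depth y \<and> (p^^(depth y - depth v)) y = v"
  proof (cases "v \<in> Q")
    case False
    then have "depth y - depth v = k" using depth_eq_0_iff[OF assms] dv by auto
    then show ?thesis using y k dv by simp
  next
    case True
    have "(p^^(depth y)) y = v"
    proof (cases "k \<le> depth y")
      case True
      then have "(p^^(depth y)) y = (p^^(depth y - k)) ((p^^k) y)"
        using funpow_add_apply[of "depth y - k" k p] by simp
      then show ?thesis using k \<open>v \<in> Q\<close> iter_parent_root by simp
    next
      case False
      then have "(p^^k) y = (p^^(k - depth y)) ((p^^(depth y)) y)"
        using funpow_add_apply[of "k - depth y" "depth y" p] by simp
      then show ?thesis using k y iter_parent_in_roots iter_parent_root by simp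
    qed
    then show ?thesis using y depth_eq_0_iff[OF assms] True by simp
  qed
qed (auto simp: subtree_def)

lemma subtree_subset: "subtree v \<subseteq> V"
  unfolding subtree_def by auto

lemma subtree_self: "v \<in> V \<Longrightarrow> v \<in> subtree v"
  unfolding subtree_def by (auto intro: exI[of _ 0])

lemma subtree_trans:
  assumes "y \<in> subtree v" "v \<in> subtree w"
  shows "y \<in> subtree w"
proof -
  obtain k where "y \<in> V" "(p^^k) y = v" using assms(1) unfolding subtree_def by auto
  moreover obtain l where "(p^^l) v = w" using assms(2) unfolding subtree_def by auto
  ultimately show ?thesis using funpow_add_apply[of l k p y] unfolding subtree_def by auto
qed

lemma subtree_iter_parent: "y \<in> V \<Longrightarrow> y \<in> subtree ((p^^k) y)"
  unfolding subtree_def by blast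

lemma subtree_parent: "y \<in> V \<Longrightarrow> y \<in> subtree (p y)"
  using subtree_iter_parent[of y 1] by simp

lemma depth_le_subtree: "v \<in> V \<Longrightarrow> y \<in> subtree v \<Longrightarrow> depth v \<le> depth y"
  using subtree_iff by blast

lemma subtree_same_depth:
  assumes "v \<in> V" "v' \<in> V" "y \<in> subtree v" "y \<in> subtree v'" "depth v = depth v'"
  shows "v = v'"
proof -
  have "(p^^(depth y - depth v)) y = v" using assms(3) unfolding subtree_iff[OF assms(1)] by blast
  moreover have "(p^^(depth y - depth v')) y = v'" using assms(4) unfolding subtree_iff[OF assms(2)] by blast
  ultimately show ?thesis using assms(5) by metis
qed

lemma subtree_nested:
  assumes "v \<in> V" "w \<in> V" "y \<in> subtree v" "y \<in> subtree w" "depth v \<le> depth w"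
  shows "w \<in> subtree v"
proof -
  have y: "depth w \<le> depth y" "(p^^(depth y - depth w)) y = w"
    using assms(4) unfolding subtree_iff[OF assms(2)] by blast+
  have "(p^^(depth y - depth v)) y = v" using assms(3) unfolding subtree_iff[OF assms(1)] by blast
  moreover have "(p^^(depth y - depth v)) y = (p^^(depth w - depth v)) ((p^^(depth y - depth w)) y)"
    using y(1) assms(5) funpow_add_apply[of "depth w - depth v" "depth y - depth w" p] by simp
  ultimately have "(p^^(depth w - depth v)) w = v" using y(2) by simp
  then show ?thesis using assms(2) unfolding subtree_def by blast
qed

lemma parent_in_subtree:
  assumes "y \<in> subtree c" "y \<noteq> c"
  shows "p y \<in> subtree c"
proof -
  obtain k where k: "y \<in> V" "(p^^k) y = c" using assms(1) unfolding subtree_def by auto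
  then obtain j where "k = Suc j" using assms(2) by (cases k) auto
  then have "(p^^j) (p y) = c" using k by (simp add: funpow_swap1)
  then show ?thesis using parent_in[OF k(1)] unfolding subtree_def by blast
qed

definition children :: "'a \<Rightarrow> 'a set" where
  "children v = {c \<in> V. c \<notin> Q \<and> p c = v}"

lemma finite_children: "v \<in> V \<Longrightarrow> finite (children v)"
  using finite_fibre[of v] unfolding children_def by (rule finite_subset[rotated]) auto

lemma subtree_decomp:
  assumes v: "v \<in> V"
  shows "subtree v = insert v (\<Union>c\<in>children v. subtree c)"
proof
  show "subtree v \<subseteq> insert v (\<Union>c\<in>children v. subtree c)"
  proof
    fix y assume y: "y \<in> subtree v"
    then have yy: "y \<in> V" "depth v \<le> depth y" "(p^^(depth y - depth v)) y = v" using subtree_iff[OF v] by auto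
    show "y \<in> insert v (\<Union>c\<in>children v. subtree c)"
    proof (cases "depth y = depth v")
      case False
      define c where "c = (p^^(depth y - depth v - 1)) y"
      have cV: "c \<in> V" using iter_parent_in yy c_def by simp
      have "depth c = depth v + 1" using depth_iter_parent[OF yy(1)] c_def False yy(2) by simp
      then have "c \<notin> Q" using depth_eq_0_iff[OF cV] by simp
      moreover have "p c = (p^^(Suc (depth y - depth v - 1))) y" unfolding c_def by simp
      then have "p c = v" using False yy(2,3) by (simp add: Suc_diff_Suc)
      moreover have "y \<in> subtree c" using subtree_iter_parent[OF yy(1)] c_def by simp
      ultimately show ?thesis using cV unfolding children_def by auto
    qed (use yy in simp)
  qed
  show "insert v (\<Union>c\<in>children v. subtree c) \<subseteq> subtree v"
    using subtree_self[OF v] subtree_trans subtree_parent unfolding children_def by auto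
qed

lemma vertices_eq_UN_subtree: "V = (\<Union>q\<in>Q. subtree q)"
proof
  show "V \<subseteq> (\<Union>q\<in>Q. subtree q)"
    using iter_parent_in_roots subtree_iter_parent by blast
qed (use subtree_subset in auto)

definition heavy :: "'a set" where
  "heavy = {v \<in> V. v \<notin> Q \<and> infinite (subtree v)}"

lemma heavy_vertex: "x \<in> heavy \<Longrightarrow> x \<in> V" and heavy_not_root: "x \<in> heavy \<Longrightarrow> x \<notin> Q"
  unfolding heavy_def by auto

lemma heavy_child:
  assumes "v \<in> heavy"
  shows "\<exists>c\<in>children v. c \<in> heavy"
proof (rule ccontr)
  assume "\<not> ?thesis"
  then have "\<forall>c\<in>children v. finite (subtree c)" unfolding children_def heavy_def by blast
  then have "finite (subtree v)"
    using subtree_decomp[OF heavy_vertex[OF assms]] finite_children[OF heavy_vertex[OF assms]] by simp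
  then show False using assms heavy_def by simp
qed

lemma heavy_parent:
  assumes "v \<in> heavy" "p v \<notin> Q"
  shows "p v \<in> heavy"
proof -
  have "subtree v \<subseteq> subtree (p v)" using subtree_trans subtree_parent heavy_vertex[OF assms(1)] by blast
  then show ?thesis using assms parent_in finite_subset unfolding heavy_def by blast
qed

lemma heavy_child_of_root: "\<exists>c. c \<in> heavy \<and> p c \<in> Q"
proof -
  have "\<not> (\<forall>q\<in>Q. finite (subtree q))"
    using vertices_eq_UN_subtree infinite_vertices finite_roots by (metis finite_UN)
  then obtain q where q: "q \<in> Q" "infinite (subtree q)" by blast
  have qV: "q \<in> V" using q roots_subset by auto
  have "\<not> (\<forall>c\<in>children q. finite (subtree c))"
    using q subtree_decomp[OF qV] finite_children[OF qV] by auto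
  then obtain c where "c \<in> children q" "infinite (subtree c)" by blast
  then show ?thesis using q unfolding children_def heavy_def by auto
qed

lemma subtree_light:
  assumes "c \<in> V" "c \<notin> Q" "c \<notin> heavy" and "y \<in> subtree c"
  shows "y \<notin> heavy" and "y \<notin> Q"
proof -
  have "finite (subtree c)" using assms(1-3) heavy_def by auto
  moreover have "subtree y \<subseteq> subtree c" using assms(4) subtree_trans by blast
  ultimately show "y \<notin> heavy" using finite_subset unfolding heavy_def by blast
  obtain k where "(p^^k) y = c" using assms(4) unfolding subtree_def by blast
  then show "y \<notin> Q" using assms(2) iter_parent_root by metis
qed

definition is_subtree :: "'a \<Rightarrow> 'a set \<Rightarrow> bool" where
  "is_subtree v W \<longleftrightarrow> W \<subseteq> subtree v \<and> (\<forall>y\<in>W. y \<noteq> v \<longrightarrow> p y \<in> W)"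

lemma iter_parent_in_is_subtree:
  assumes "is_subtree v W" "v \<in> V" "y \<in> W"
  shows "j \<le> depth y - depth v \<Longrightarrow> (p^^j) y \<in> W"
proof (induction j)
  case (Suc j)
  have "y \<in> V" using assms subtree_subset unfolding is_subtree_def by blast
  then have "depth ((p^^j) y) \<noteq> depth v" using Suc.prems depth_iter_parent by simp
  then have "(p^^j) y \<noteq> v" by metis
  then show ?case using assms(1) Suc unfolding is_subtree_def by simp
qed (use assms in simp)

lemma root_in_is_subtree:
  assumes "is_subtree v W" "v \<in> V" "y \<in> W"
  shows "v \<in> W"
proof -
  have "(p^^(depth y - depth v)) y = v"
    using assms(1,3) subtree_iff[OF assms(2)] unfolding is_subtree_def by blast
  then show ?thesis using iter_parent_in_is_subtree[OF assms, of "depth y - depth v"] by simp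
qed

lemma depth_lt_card_is_subtree:
  assumes "finite W" "is_subtree v W" "v \<in> V" "y \<in> W"
  shows "depth y < depth v + card W"
proof -
  define d where "d = depth y - depth v"
  have "y \<in> subtree v" using assms(2,4) unfolding is_subtree_def by blast
  then have y: "y \<in> V" "depth v \<le> depth y" unfolding subtree_iff[OF assms(3)] by simp_all
  have "inj_on (\<lambda>j. (p^^j) y) {0..d}"
  proof (rule inj_onI)
    fix i j assume ij: "i \<in> {0..d}" "j \<in> {0..d}" and "(p^^i) y = (p^^j) y"
    then have "depth ((p^^i) y) = depth ((p^^j) y)" by simp
    then show "i = j" using ij depth_iter_parent[OF y(1)] unfolding d_def by simp
  qed
  then have "card ((\<lambda>j. (p^^j) y) ` {0..d}) = Suc d" by (simp add: card_image)
  moreover have "(\<lambda>j. (p^^j) y) ` {0..d} \<subseteq> W"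
    using iter_parent_in_is_subtree[OF assms(2-4)] unfolding d_def by auto
  ultimately have "Suc d \<le> card W" using assms(1) by (metis card_mono)
  then show ?thesis using y unfolding d_def by simp
qed

lemma is_subtree_Int_subtree:
  assumes "is_subtree v W" "v \<in> V" "z \<in> W"
  shows "is_subtree z (W \<inter> subtree z)"
  unfolding is_subtree_def
proof (intro conjI ballI impI)
  fix y assume y: "y \<in> W \<inter> subtree z" "y \<noteq> z"
  have zv: "z \<in> subtree v" using assms(1,3) unfolding is_subtree_def by blast
  have zV: "z \<in> V" using zv subtree_subset by blast
  have "y \<noteq> v"
  proof
    assume "y = v"
    then have "depth z \<le> depth v" "depth v \<le> depth z"
      using y zv depth_le_subtree assms(2) zV by auto
    then have "v = z" using subtree_same_depth[OF assms(2) zV subtree_self[OF assms(2)]] y \<open>y = v\<close> by simp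
    then show False using y \<open>y = v\<close> by simp
  qed
  then show "p y \<in> W \<inter> subtree z" using assms(1) y parent_in_subtree unfolding is_subtree_def by blast
qed auto

lemma exists_deep_vertex:
  assumes "finite W" "is_subtree v W" "v \<in> V" "1 \<le> n" "n \<le> card W"
  obtains w where "w \<in> W" "n \<le> card (W \<inter> subtree w)" "\<forall>y \<in> W \<inter> subtree w. depth y < depth w + n"
proof -
  define Cand where "Cand = {w \<in> W. n \<le> card (W \<inter> subtree w)}"
  have "W \<noteq> {}" using assms(4,5) by auto
  then have vW: "v \<in> W" using root_in_is_subtree[OF assms(2,3)] by blast
  have "W \<inter> subtree v = W" using assms(2) unfolding is_subtree_def by blast
  then have "v \<in> Cand" using vW assms(5) unfolding Cand_def by simp
  moreover have finC: "finite Cand" using assms(1) unfolding Cand_def by simp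
  ultimately have "Max (depth ` Cand) \<in> depth ` Cand" by (intro Max_in) auto
  then obtain w where wC: "w \<in> Cand" and dw: "depth w = Max (depth ` Cand)" by auto
  have wmax: "depth w' \<le> depth w" if "w' \<in> Cand" for w' using that finC dw by simp
  have wW: "w \<in> W" using wC Cand_def by simp
  have wV: "w \<in> V" using wW assms(2) subtree_subset unfolding is_subtree_def by blast
  have "depth y < depth w + n" if y: "y \<in> W \<inter> subtree w" for y
  proof (rule ccontr)
    assume "\<not> depth y < depth w + n"
    then have deep: "depth w + n \<le> depth y" by simp
    have yV: "y \<in> V" using y subtree_subset by blast
    define z where "z = (p^^(depth y - depth w - 1)) y"
    have dz: "depth z = depth w + 1" unfolding z_def using depth_iter_parent[OF yV] deep assms(4) by simp
    have "depth v \<le> depth w" using wW assms(2,3) depth_le_subtree unfolding is_subtree_def by blast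
    then have zW: "z \<in> W" unfolding z_def using iter_parent_in_is_subtree[OF assms(2,3)] y deep by simp
    have "y \<in> W \<inter> subtree z" using y yV subtree_iter_parent unfolding z_def by blast
    moreover have "z \<in> V" using zW assms(2) subtree_subset unfolding is_subtree_def by blast
    ultimately have "depth y < depth z + card (W \<inter> subtree z)"
      using depth_lt_card_is_subtree is_subtree_Int_subtree[OF assms(2,3) zW] assms(1) by blast
    then have "z \<in> Cand" using dz deep zW unfolding Cand_def by simp
    then show False using wmax dz by fastforce
  qed
  then show ?thesis using that wW wC unfolding Cand_def by blast
qed

lemma is_subtree_Diff:
  assumes "is_subtree v W" and "P \<subseteq> W \<inter> subtree w"
    and upper: "\<forall>a\<in>P. \<forall>z\<in>W \<inter> subtree w. depth a < depth z \<longrightarrow> z \<in> P"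
  shows "is_subtree v (W - P)"
  unfolding is_subtree_def
proof (intro conjI ballI impI)
  fix y assume y: "y \<in> W - P" "y \<noteq> v"
  then have py: "p y \<in> W" using assms(1) unfolding is_subtree_def by blast
  have "p y \<notin> P"
  proof
    assume pyP: "p y \<in> P"
    have yV: "y \<in> V" using y assms(1) subtree_subset unfolding is_subtree_def by blast
    have "y \<notin> Q" using pyP y parent_root by fastforce
    then have "depth (p y) < depth y" using depth_parent[OF yV] by simp
    moreover have "y \<in> W \<inter> subtree w"
      using y pyP assms(2) subtree_trans[OF subtree_parent[OF yV]] by blast
    ultimately show False using upper pyP y by blast
  qed
  then show "p y \<in> W - P" using py by blast
qed (use assms(1) in \<open>auto simp: is_subtree_def\<close>)

definition anchored :: "nat \<Rightarrow> 'a set \<Rightarrow> bool" where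
  "anchored k B \<longleftrightarrow> (\<exists>u. \<forall>y\<in>B. \<exists>i\<le>k. (p^^i) y = u)"

lemma anchored_mono:
  assumes "anchored k B" "k \<le> l"
  shows "anchored l B"
proof -
  obtain u where "\<forall>y\<in>B. \<exists>i\<le>k. (p^^i) y = u" using assms(1) unfolding anchored_def by blast
  then have "\<forall>y\<in>B. \<exists>i\<le>l. (p^^i) y = u" using assms(2) order.trans by blast
  then show ?thesis unfolding anchored_def by blast
qed

lemma anchored_shallow:
  assumes "w \<in> V" "B \<subseteq> subtree w" "\<forall>y\<in>B. depth y \<le> depth w + k"
  shows "anchored k B"
  unfolding anchored_def
proof (intro exI[of _ w] ballI)
  fix y assume y: "y \<in> B"
  then have "(p^^(depth y - depth w)) y = w" using assms(2) subtree_iff[OF assms(1)] by blast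
  moreover have "depth y - depth w \<le> k" using assms(3) y by fastforce
  ultimately show "\<exists>i\<le>k. (p^^i) y = w" by blast
qed

definition carving :: "nat \<Rightarrow> 'a \<Rightarrow> 'a set \<Rightarrow> 'a set set \<Rightarrow> 'a set \<Rightarrow> bool" where
  "carving n v W P R \<longleftrightarrow> R \<subseteq> W \<and> card R < n \<and> (\<forall>y\<in>R. depth y < depth v + n) \<and>
     disjoint P \<and> \<Union>P = W - R \<and> (\<forall>B\<in>P. card B = n \<and> anchored n B)"

lemma carving_exists:
  assumes "1 \<le> n" "finite W" "is_subtree v W" "v \<in> V"
  shows "\<exists>P R. carving n v W P R"
  using assms(2,3)
proof (induction "card W" arbitrary: W rule: less_induct)
  case less
  show ?case
  proof (cases "card W < n")
    case True
    have "depth y < depth v + n" if "y \<in> W" for y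
      using depth_lt_card_is_subtree[OF less.prems assms(4) that] True by linarith
    then have "carving n v W {} W" using True unfolding carving_def by simp
    then show ?thesis by blast
  next
    case False
    then have "n \<le> card W" by simp
    then obtain w where w: "w \<in> W" "n \<le> card (W \<inter> subtree w)"
      and shallow: "\<forall>y \<in> W \<inter> subtree w. depth y < depth w + n"
      using exists_deep_vertex[OF less.prems assms(4,1)] by blast
    have "finite (W \<inter> subtree w)" using less.prems(1) by simp
    then obtain P0 where P0: "P0 \<subseteq> W \<inter> subtree w" "card P0 = n"
      and upper: "\<forall>a\<in>P0. \<forall>z\<in>W \<inter> subtree w. depth a < depth z \<longrightarrow> z \<in> P0"
      using exists_upper_subset[OF _ w(2), of depth] by blast
    have "finite P0" using P0(1) less.prems(1) finite_subset by blast
    then have "card (W - P0) = card W - n" using P0 by (simp add: card_Diff_subset)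
    then have "card (W - P0) < card W" using False assms(1) by simp
    moreover have "finite (W - P0)" "is_subtree v (W - P0)"
      using less.prems(1) is_subtree_Diff[OF less.prems(2) P0(1) upper] by simp_all
    ultimately obtain P R where PR: "carving n v (W - P0) P R" using less.hyps by blast
    have "w \<in> V" using w(1) less.prems(2) subtree_subset unfolding is_subtree_def by blast
    moreover have "\<forall>y\<in>P0. depth y \<le> depth w + n"
    proof
      fix y assume "y \<in> P0"
      then have "y \<in> W \<inter> subtree w" using P0(1) by blast
      then show "depth y \<le> depth w + n" using less_imp_le[OF bspec[OF shallow]] by blast
    qed
    ultimately have "anchored n P0" using P0(1) by (intro anchored_shallow) auto
    moreover have "disjoint (insert P0 P)" "\<Union>(insert P0 P) = W - R" "R \<subseteq> W"
      using PR P0(1) unfolding carving_def disjoint_def by auto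
    ultimately have "carving n v W (insert P0 P) R" using PR P0(2) unfolding carving_def by auto
    then show ?thesis by blast
  qed
qed

end

datatype 'a region = Light 'a | Ray 'a

locale rooted_forest_blocks = rooted_forest +
  fixes n :: nat
  assumes block_size_pos: "1 \<le> n" and card_roots_le: "card Q \<le> n" and roots_nonempty: "Q \<noteq> {}"
begin

definition light_root :: "'a \<Rightarrow> bool" where
  "light_root c \<longleftrightarrow> c \<in> V \<and> c \<notin> Q \<and> c \<notin> heavy \<and> (p c \<in> heavy \<or> p c \<in> Q)"

definition light_carving :: "'a \<Rightarrow> 'a set set \<times> 'a set" where
  "light_carving c = (SOME PR. carving n c (subtree c) (fst PR) (snd PR))"

definition light_blocks :: "'a \<Rightarrow> 'a set set" where
  "light_blocks c = fst (light_carving c)"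

definition light_rest :: "'a \<Rightarrow> 'a set" where
  "light_rest c = snd (light_carving c)"

lemma finite_subtree_light_root: "light_root c \<Longrightarrow> finite (subtree c)"
  unfolding light_root_def heavy_def by auto

lemma subtree_light_root: "light_root c \<Longrightarrow> y \<in> subtree c \<Longrightarrow> y \<notin> heavy \<and> y \<notin> Q"
  using subtree_light unfolding light_root_def by blast

lemma carving_light_root:
  assumes "light_root c"
  shows "carving n c (subtree c) (light_blocks c) (light_rest c)"
proof -
  have cV: "c \<in> V" using assms light_root_def by auto
  have "is_subtree c (subtree c)" unfolding is_subtree_def using parent_in_subtree by blast
  then obtain P R where "carving n c (subtree c) P R"
    using carving_exists[OF block_size_pos finite_subtree_light_root[OF assms] _ cV] by blast
  then have "carving n c (subtree c) (fst (P, R)) (snd (P, R))" by simp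
  then show ?thesis unfolding light_blocks_def light_rest_def light_carving_def by (rule someI)
qed

lemma light_rest_subtree: "light_root c \<Longrightarrow> light_rest c \<subseteq> subtree c"
  using carving_light_root unfolding carving_def by blast

lemma light_root_subtree_disjoint:
  assumes c: "light_root c" and c': "light_root c'" and "c \<noteq> c'"
  shows "subtree c \<inter> subtree c' = {}"
proof (rule ccontr)
  have cV: "c \<in> V" "c' \<in> V" using c c' light_root_def by auto
  assume "subtree c \<inter> subtree c' \<noteq> {}"
  then obtain y where y: "y \<in> subtree c" "y \<in> subtree c'" by blast
  have "c' \<in> subtree c \<and> c \<noteq> c' \<or> c \<in> subtree c' \<and> c' \<noteq> c"
    using subtree_nested[OF cV y] subtree_nested[OF cV(2,1) y(2,1)] assms(3) nat_le_linear by blast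
  then have "p c' \<in> subtree c \<or> p c \<in> subtree c'" using parent_in_subtree by blast
  moreover have "p c' \<in> heavy \<or> p c' \<in> Q" "p c \<in> heavy \<or> p c \<in> Q"
    using c c' light_root_def by auto
  ultimately show False using subtree_light_root[OF c] subtree_light_root[OF c'] by blast
qed

lemma light_root_exists:
  assumes "y \<in> V" "y \<notin> heavy" "y \<notin> Q"
  shows "\<exists>c. light_root c \<and> y \<in> subtree c"
  using assms
proof (induction "depth y" arbitrary: y rule: less_induct)
  case less
  show ?case
  proof (cases "p y \<in> heavy \<or> p y \<in> Q")
    case True
    then have "light_root y" using less.prems unfolding light_root_def by simp
    then show ?thesis using subtree_self less.prems by blast
  next
    case False
    have "depth (p y) < depth y" using depth_parent[OF less.prems(1,3)] by simp
    then obtain c where "light_root c" "p y \<in> subtree c"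
      using less.hyps False parent_in[OF less.prems(1)] by blast
    then show ?thesis using subtree_trans[OF subtree_parent[OF less.prems(1)]] by blast
  qed
qed

definition leftover :: "'a \<Rightarrow> 'a set" where
  "leftover a = \<Union>(light_rest ` {c. light_root c \<and> p c = a})"

lemma leftoverE:
  assumes "y \<in> leftover a"
  obtains c where "light_root c" "p c = a" "y \<in> light_rest c" "y \<in> subtree c"
  using assms light_rest_subtree unfolding leftover_def by blast

lemma leftover_not_heavy_root: "y \<in> leftover a \<Longrightarrow> y \<notin> heavy \<and> y \<notin> Q"
  by (metis leftoverE subtree_light_root)

lemma leftover_subset: "leftover a \<subseteq> V"
  using subtree_subset by (blast elim: leftoverE)

lemma leftover_disjoint:
  assumes "a \<noteq> b"
  shows "leftover a \<inter> leftover b = {}"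
  using light_root_subtree_disjoint assms by (blast elim: leftoverE)

lemma finite_leftover:
  assumes "a \<in> V"
  shows "finite (leftover a)"
proof -
  have "{c. light_root c \<and> p c = a} \<subseteq> children a" unfolding children_def light_root_def by auto
  then have "finite {c. light_root c \<and> p c = a}" using finite_children[OF assms] finite_subset by blast
  moreover have "finite (light_rest c)" if "light_root c" for c
    using light_rest_subtree[OF that] finite_subtree_light_root[OF that] by (rule finite_subset)
  ultimately show ?thesis unfolding leftover_def by auto
qed

definition light_part :: "'a \<Rightarrow> 'a set" where
  "light_part c = subtree c - light_rest c"

lemma light_part_leftover_disjoint: "light_root c \<Longrightarrow> light_part c \<inter> leftover a = {}"
  unfolding light_part_def using light_root_subtree_disjoint by (blast elim: leftoverE)

definition cluster :: "'a \<Rightarrow> 'a set" where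
  "cluster u = insert u (leftover u)"

definition root_leftover :: "'a set" where
  "root_leftover = (\<Union>q\<in>Q. leftover q)"

lemma finite_cluster: "u \<in> V \<Longrightarrow> finite (cluster u)"
  unfolding cluster_def using finite_leftover by simp

lemma cluster_subset: "u \<in> V \<Longrightarrow> cluster u \<subseteq> V"
  unfolding cluster_def using leftover_subset by auto

lemma cluster_disjoint: "u \<in> heavy \<Longrightarrow> u' \<in> heavy \<Longrightarrow> u \<noteq> u' \<Longrightarrow> cluster u \<inter> cluster u' = {}"
  unfolding cluster_def using leftover_disjoint leftover_not_heavy_root by blast

lemma cluster_roots_disjoint: "u \<in> heavy \<Longrightarrow> cluster u \<inter> Q = {}"
  unfolding cluster_def using leftover_not_heavy_root heavy_not_root by blast

lemma cluster_root_leftover_disjoint: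
  assumes "u \<in> heavy"
  shows "cluster u \<inter> root_leftover = {}"
proof -
  have "leftover u \<inter> leftover q = {}" if "q \<in> Q" for q
    using leftover_disjoint heavy_not_root[OF assms] that by metis
  then show ?thesis
    using assms leftover_not_heavy_root unfolding cluster_def root_leftover_def by blast
qed

lemma roots_root_leftover_disjoint: "Q \<inter> root_leftover = {}"
  unfolding root_leftover_def using leftover_not_heavy_root by blast

lemma finite_root_leftover: "finite root_leftover"
  unfolding root_leftover_def using finite_roots finite_leftover roots_subset by blast

lemma root_leftover_subset: "root_leftover \<subseteq> V"
  unfolding root_leftover_def using leftover_subset by blast

lemma light_part_disjoint:
  assumes "light_root c"
  shows "light_part c \<inter> (Q \<union> root_leftover \<union> (\<Union>u\<in>heavy. cluster u)) = {}"
  using light_part_leftover_disjoint[OF assms] subtree_light_root[OF assms]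
  unfolding light_part_def cluster_def root_leftover_def by blast

lemma cluster_ancestor:
  assumes "u \<in> heavy" "y \<in> cluster u"
  shows "\<exists>j\<le>n. (p^^j) y = u"
proof (cases "y = u")
  case False
  then obtain c where c: "light_root c" "p c = u" "y \<in> light_rest c" "y \<in> subtree c"
    using assms(2) unfolding cluster_def by (blast elim: leftoverE)
  have cV: "c \<in> V" using c light_root_def by simp
  have "depth y < depth c + n" using carving_light_root[OF c(1)] c(3) unfolding carving_def by blast
  moreover have "(p^^(depth y - depth c)) y = c" "depth c \<le> depth y" using c(4) subtree_iff[OF cV] by blast+
  ultimately have "(p^^(Suc (depth y - depth c))) y = u" "Suc (depth y - depth c) \<le> n"
    using c(2) by simp_all
  then show ?thesis by blast
qed (auto intro: exI[of _ 0])

definition heavy_succ :: "'a \<Rightarrow> 'a" where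
  "heavy_succ u = (SOME c. c \<in> children u \<and> c \<in> heavy)"

definition first_heavy :: "'a" where
  "first_heavy = (SOME c. c \<in> heavy \<and> p c \<in> Q)"

definition ray :: "'a \<Rightarrow> nat \<Rightarrow> 'a" where
  "ray x i = (heavy_succ^^i) x"

definition ray_starts :: "'a set" where
  "ray_starts = {x \<in> heavy. p x \<in> Q \<or> heavy_succ (p x) \<noteq> x}"

lemma heavy_succ: assumes "u \<in> heavy" shows "heavy_succ u \<in> heavy" "p (heavy_succ u) = u"
proof -
  have "\<exists>c. c \<in> children u \<and> c \<in> heavy" using heavy_child[OF assms] by blast
  then have "heavy_succ u \<in> children u \<and> heavy_succ u \<in> heavy"
    unfolding heavy_succ_def by (rule someI_ex)
  then show "heavy_succ u \<in> heavy" "p (heavy_succ u) = u" unfolding children_def by auto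
qed

lemma first_heavy: "first_heavy \<in> heavy" "p first_heavy \<in> Q"
proof -
  have "first_heavy \<in> heavy \<and> p first_heavy \<in> Q"
    unfolding first_heavy_def using heavy_child_of_root by (rule someI_ex)
  then show "first_heavy \<in> heavy" "p first_heavy \<in> Q" by auto
qed

lemma first_heavy_ray_start: "first_heavy \<in> ray_starts"
  using first_heavy unfolding ray_starts_def by simp

lemma ray_start_heavy: "x \<in> ray_starts \<Longrightarrow> x \<in> heavy"
  unfolding ray_starts_def by simp

lemma ray_0 [simp]: "ray x 0 = x" and ray_Suc: "ray x (Suc i) = heavy_succ (ray x i)"
  unfolding ray_def by simp_all

lemma ray_heavy: "x \<in> heavy \<Longrightarrow> ray x i \<in> heavy"
  by (induction i) (auto simp: ray_Suc heavy_succ)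

lemma parent_ray_Suc: "x \<in> heavy \<Longrightarrow> p (ray x (Suc i)) = ray x i"
  using ray_Suc heavy_succ(2)[OF ray_heavy] by simp

lemma iter_parent_ray: "x \<in> heavy \<Longrightarrow> (p^^m) (ray x (i + m)) = ray x i"
  by (induction m) (simp_all add: funpow_swap1 parent_ray_Suc del: funpow.simps add: funpow.simps)

lemma ray_start_not_heavy_succ:
  assumes "x \<in> ray_starts" "u \<in> heavy"
  shows "x \<noteq> heavy_succ u"
  using assms heavy_succ(2)[OF assms(2)] heavy_not_root unfolding ray_starts_def by auto

lemma ray_inj:
  assumes "x \<in> ray_starts" "x' \<in> ray_starts" "ray x i = ray x' i'"
  shows "x = x' \<and> i = i'"
  using assms(3)
proof (induction i arbitrary: i')
  case 0
  then show ?case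
    using ray_start_not_heavy_succ[OF assms(1) ray_heavy[OF ray_start_heavy[OF assms(2)]]]
    by (cases i') (auto simp: ray_Suc)
next
  case (Suc i)
  show ?case
  proof (cases i')
    case 0
    then show ?thesis
      using Suc.prems ray_start_not_heavy_succ[OF assms(2) ray_heavy[OF ray_start_heavy[OF assms(1)]]]
      by (metis ray_0 ray_Suc)
  next
    case (Suc j)
    then have "p (ray x (Suc i)) = p (ray x' (Suc j))" using Suc.prems by simp
    then have "ray x i = ray x' j"
      using parent_ray_Suc[OF ray_start_heavy[OF assms(1)]] parent_ray_Suc[OF ray_start_heavy[OF assms(2)]]
      by simp
    then show ?thesis using Suc.IH \<open>i' = Suc j\<close> by simp
  qed
qed

lemma ray_cover: "y \<in> heavy \<Longrightarrow> \<exists>x\<in>ray_starts. \<exists>i. y = ray x i"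
proof (induction "depth y" arbitrary: y rule: less_induct)
  case less
  show ?case
  proof (cases "y \<in> ray_starts")
    case False
    then have "p y \<notin> Q" "heavy_succ (p y) = y" using less.prems unfolding ray_starts_def by auto
    moreover have "depth (p y) < depth y"
      using depth_parent[OF heavy_vertex[OF less.prems] heavy_not_root[OF less.prems]] by simp
    ultimately obtain x i where "x \<in> ray_starts" "p y = ray x i"
      using less.hyps heavy_parent[OF less.prems] by blast
    then show ?thesis using ray_Suc \<open>heavy_succ (p y) = y\<close> by metis
  qed (metis ray_0)
qed

lemma anchored_ray_window:
  assumes "x \<in> heavy" "B \<subseteq> (\<Union>k\<in>{i..i+n}. cluster (ray x k))"
  shows "anchored (2 * n) B"
  unfolding anchored_def
proof (intro exI[of _ "ray x i"] ballI)
  fix y assume "y \<in> B"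
  then have "y \<in> (\<Union>k\<in>{i..i+n}. cluster (ray x k))" by (rule subsetD[OF assms(2)])
  then obtain k where k: "i \<le> k" "k \<le> i + n" "y \<in> cluster (ray x k)" by auto
  obtain j where j: "j \<le> n" "(p^^j) y = ray x k" using cluster_ancestor[OF ray_heavy[OF assms(1)] k(3)] by blast
  obtain d where d: "k = i + d" using k(1) le_Suc_ex by blast
  have "(p^^(d + j)) y = (p^^d) ((p^^j) y)" by (rule funpow_add_apply)
  also have "\<dots> = ray x i" using j(2) iter_parent_ray[OF assms(1), of d i] d by simp
  finally have "(p^^(d + j)) y = ray x i" .
  moreover have "d + j \<le> 2 * n" using j k d by simp
  ultimately show "\<exists>j\<le>2 * n. (p^^j) y = ray x i" by blast
qed

definition ray_seq :: "'a \<Rightarrow> nat \<Rightarrow> 'a set" where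
  "ray_seq x i = (if x \<noteq> first_heavy then cluster (ray x i)
     else if i = 0 then Q else if i = 1 then cluster x \<union> root_leftover else cluster (ray x (i - 1)))"

lemma ray_seq_subset:
  "ray_seq x i \<subseteq> Q \<union> root_leftover \<union> cluster (ray x (if x = first_heavy then i - 1 else i))"
  unfolding ray_seq_def by auto

lemma finite_ray_seq:
  assumes "x \<in> heavy"
  shows "finite (ray_seq x i)"
  unfolding ray_seq_def using finite_roots finite_root_leftover
    finite_cluster[OF heavy_vertex[OF ray_heavy[OF assms]]] finite_cluster[OF heavy_vertex[OF assms]]
  by (cases "x = first_heavy") simp_all

lemma ray_seq_nonempty: "ray_seq x i \<noteq> {}"
  by (simp add: ray_seq_def cluster_def roots_nonempty)

lemma ray_seq_disjoint:
  assumes x: "x \<in> ray_starts" and "i \<noteq> j"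
  shows "ray_seq x i \<inter> ray_seq x j = {}"
proof -
  have xK: "x \<in> heavy" using x ray_start_heavy by blast
  have rays: "cluster (ray x k) \<inter> cluster (ray x l) = {}" if "k \<noteq> l" for k l
    using cluster_disjoint ray_heavy[OF xK] ray_inj[OF x x] that by metis
  have "ray_seq x i \<inter> ray_seq x j = {}" if "i < j" for i j
  proof (cases "x = first_heavy")
    case True
    consider "i = 0" | "i = 1" | "1 < i" by linarith
    then show ?thesis
    proof cases
      case 1
      then show ?thesis using that True cluster_roots_disjoint[OF ray_heavy[OF xK]]
          cluster_roots_disjoint[OF xK] roots_root_leftover_disjoint unfolding ray_seq_def by auto
    next
      case 2
      then have "cluster x \<inter> cluster (ray x (j - 1)) = {}" using rays[of 0 "j - 1"] that by simp
      then show ?thesis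
        using 2 that True cluster_root_leftover_disjoint[OF ray_heavy[OF xK]] unfolding ray_seq_def by auto
    next
      case 3
      then show ?thesis using rays[of "i - 1" "j - 1"] that True unfolding ray_seq_def by auto
    qed
  qed (use rays that in \<open>simp add: ray_seq_def\<close>)
  then show ?thesis using assms(2) by (metis Int_commute nat_neq_iff)
qed

lemma ray_seq_disjoint_starts:
  assumes x: "x \<in> ray_starts" and x': "x' \<in> ray_starts" and "x \<noteq> x'"
  shows "ray_seq x i \<inter> ray_seq x' j = {}"
proof -
  have "ray_seq x i \<inter> ray_seq x' j = {}" if x: "x \<in> ray_starts" and x': "x' \<in> ray_starts"
    and "x \<noteq> x'" "x' \<noteq> first_heavy" for x x' i j
  proof -
    have u: "ray x' j \<in> heavy" using ray_heavy ray_start_heavy x' by blast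
    have "ray x k \<noteq> ray x' j" for k using ray_inj[OF x x'] \<open>x \<noteq> x'\<close> by blast
    then have "cluster (ray x k) \<inter> cluster (ray x' j) = {}" for k
      using cluster_disjoint u ray_heavy ray_start_heavy x by blast
    then have "ray_seq x i \<inter> cluster (ray x' j) = {}"
      using ray_seq_subset[of x i] cluster_roots_disjoint[OF u] cluster_root_leftover_disjoint[OF u]
      by blast
    then show ?thesis using \<open>x' \<noteq> first_heavy\<close> by (simp add: ray_seq_def)
  qed
  then show ?thesis using assms by (metis Int_commute)
qed

lemma light_part_ray_seq_disjoint:
  assumes "light_root c" "x \<in> ray_starts"
  shows "light_part c \<inter> ray_seq x i = {}"
  using light_part_disjoint[OF assms(1)] ray_seq_subset[of x i] ray_heavy ray_start_heavy[OF assms(2)]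
  by blast

definition regions :: "'a region set" where
  "regions = Light ` {c. light_root c} \<union> Ray ` ray_starts"

definition region_set :: "'a region \<Rightarrow> 'a set" where
  "region_set r = (case r of Light c \<Rightarrow> light_part c | Ray x \<Rightarrow> (\<Union>i. ray_seq x i))"

definition region_blocks :: "'a region \<Rightarrow> 'a set set" where
  "region_blocks r = (case r of Light c \<Rightarrow> light_blocks c
     | Ray x \<Rightarrow> (SOME P. windowed_partition n (ray_seq x) P))"

lemma region_set_disjoint:
  assumes "r \<in> regions" "r' \<in> regions" "r \<noteq> r'"
  shows "region_set r \<inter> region_set r' = {}"
proof -
  have LR: "light_part c \<inter> (\<Union>i. ray_seq x i) = {}" if "light_root c" "x \<in> ray_starts" for c x
    using light_part_ray_seq_disjoint[OF that] by blast
  show ?thesis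
  proof (cases r; cases r')
    fix c c' assume "r = Light c" "r' = Light c'"
    then have "light_root c" "light_root c'" "c \<noteq> c'" using assms unfolding regions_def by auto
    then show ?thesis using light_root_subtree_disjoint \<open>r = Light c\<close> \<open>r' = Light c'\<close>
      unfolding region_set_def light_part_def by auto
  next
    fix c x assume "r = Light c" "r' = Ray x"
    then have "light_root c" "x \<in> ray_starts" using assms unfolding regions_def by auto
    then show ?thesis using LR \<open>r = Light c\<close> \<open>r' = Ray x\<close> unfolding region_set_def by simp
  next
    fix x c assume "r = Ray x" "r' = Light c"
    then have "light_root c" "x \<in> ray_starts" using assms unfolding regions_def by auto
    then show ?thesis using LR \<open>r = Ray x\<close> \<open>r' = Light c\<close> unfolding region_set_def by auto
  next
    fix x x' assume "r = Ray x" "r' = Ray x'"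
    then have "x \<in> ray_starts" "x' \<in> ray_starts" "x \<noteq> x'" using assms unfolding regions_def by auto
    then have "ray_seq x i \<inter> ray_seq x' j = {}" for i j by (rule ray_seq_disjoint_starts)
    then show ?thesis using \<open>r = Ray x\<close> \<open>r' = Ray x'\<close> unfolding region_set_def by auto
  qed
qed

lemma windowed_partition_ray:
  assumes "x \<in> ray_starts"
  shows "windowed_partition n (ray_seq x) (region_blocks (Ray x))"
proof -
  have "\<exists>P. windowed_partition n (ray_seq x) P"
    using windowed_partition_exists[OF block_size_pos finite_ray_seq[OF ray_start_heavy[OF assms]]
        ray_seq_nonempty ray_seq_disjoint[OF assms]] .
  then show ?thesis unfolding region_blocks_def by (simp add: someI_ex)
qed

lemma region_blocks_partition:
  assumes "r \<in> regions"
  shows "disjoint (region_blocks r)" "\<Union>(region_blocks r) = region_set r"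
    "\<And>B. B \<in> region_blocks r \<Longrightarrow> card B = n"
proof -
  have "disjoint (region_blocks r) \<and> \<Union>(region_blocks r) = region_set r \<and> (\<forall>B\<in>region_blocks r. card B = n)"
  proof (cases r)
    case (Light c)
    then have "light_root c" using assms unfolding regions_def by auto
    then show ?thesis using carving_light_root[of c] Light
      unfolding region_set_def region_blocks_def carving_def light_part_def by simp
  next
    case (Ray x)
    then have "x \<in> ray_starts" using assms unfolding regions_def by auto
    then show ?thesis using windowed_partition_ray[of x] Ray
      unfolding region_set_def windowed_partition_def by simp
  qed
  then show "disjoint (region_blocks r)" "\<Union>(region_blocks r) = region_set r"
    "\<And>B. B \<in> region_blocks r \<Longrightarrow> card B = n" by simp_all
qed

lemma cluster_in_region:
  assumes "u \<in> heavy"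
  shows "\<exists>r\<in>regions. cluster u \<subseteq> region_set r"
proof -
  obtain x i where x: "x \<in> ray_starts" "u = ray x i" using ray_cover[OF assms] by blast
  have "cluster u \<subseteq> ray_seq x (if x = first_heavy then Suc i else i)"
    using x(2) unfolding ray_seq_def by (cases i) auto
  then have "cluster u \<subseteq> region_set (Ray x)" unfolding region_set_def by auto
  moreover have "Ray x \<in> regions" using x(1) unfolding regions_def by blast
  ultimately show ?thesis by blast
qed

lemma region_set_subset:
  assumes "r \<in> regions"
  shows "region_set r \<subseteq> V"
proof (cases r)
  case (Light c)
  then show ?thesis using subtree_subset unfolding region_set_def light_part_def by auto
next
  case (Ray x)
  then have "x \<in> heavy" using assms ray_start_heavy unfolding regions_def by auto
  then have "ray_seq x i \<subseteq> V" for i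
    using ray_seq_subset[of x i] roots_subset root_leftover_subset
      cluster_subset[OF heavy_vertex[OF ray_heavy[OF \<open>x \<in> heavy\<close>]]] by blast
  then show ?thesis using Ray unfolding region_set_def by auto
qed

lemma root_part_in_region: "\<exists>r\<in>regions. Q \<union> root_leftover \<subseteq> region_set r"
proof
  show "Ray first_heavy \<in> regions" using first_heavy_ray_start unfolding regions_def by blast
  show "Q \<union> root_leftover \<subseteq> region_set (Ray first_heavy)"
    unfolding region_set_def using ray_seq_def[of first_heavy 0] ray_seq_def[of first_heavy 1] by auto
qed

lemma light_vertex_in_region:
  assumes y: "y \<in> V" "y \<notin> Q" "y \<notin> heavy"
  shows "\<exists>r\<in>regions. y \<in> region_set r"
proof -
  obtain c where c: "light_root c" "y \<in> subtree c" using light_root_exists[OF y(1,3,2)] by blast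
  show ?thesis
  proof (cases "y \<in> light_rest c")
    case False
    then have "y \<in> region_set (Light c)" using c unfolding region_set_def light_part_def by simp
    moreover have "Light c \<in> regions" using c unfolding regions_def by blast
    ultimately show ?thesis by blast
  next
    case True
    then have y_left: "y \<in> leftover (p c)" unfolding leftover_def using c by auto
    have "p c \<in> heavy \<or> p c \<in> Q" using c light_root_def by simp
    then show ?thesis
    proof
      assume "p c \<in> heavy"
      then show ?thesis using cluster_in_region y_left unfolding cluster_def by blast
    next
      assume "p c \<in> Q"
      then have "y \<in> root_leftover" using y_left unfolding root_leftover_def by blast
      then show ?thesis using root_part_in_region by blast
    qed
  qed
qed

lemma UN_region_set: "(\<Union>r\<in>regions. region_set r) = V"
proof
  show "(\<Union>r\<in>regions. region_set r) \<subseteq> V" using region_set_subset by blast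
  show "V \<subseteq> (\<Union>r\<in>regions. region_set r)"
  proof
    fix y assume y: "y \<in> V"
    consider "y \<in> Q" | "y \<in> heavy" | "y \<notin> Q" "y \<notin> heavy" by blast
    then show "y \<in> (\<Union>r\<in>regions. region_set r)"
    proof cases
      case 1
      then show ?thesis using root_part_in_region by blast
    next
      case 2
      then show ?thesis using cluster_in_region unfolding cluster_def by blast
    next
      case 3
      then show ?thesis using light_vertex_in_region[OF y] by blast
    qed
  qed
qed

lemma anchored_region_block:
  assumes r: "r \<in> regions" and B: "B \<in> region_blocks r" and avoid: "B \<inter> (Q \<union> root_leftover) = {}"
  shows "anchored (2 * n) B"
proof (cases r)
  case (Light c)
  then have "light_root c" using r unfolding regions_def by auto
  then have "anchored n B" using carving_light_root B Light unfolding region_blocks_def carving_def by auto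
  then show ?thesis by (rule anchored_mono) simp
next
  case (Ray x)
  then have x: "x \<in> ray_starts" using r unfolding regions_def by auto
  obtain i where i: "B \<subseteq> (\<Union>k\<in>{i..i+n}. ray_seq x k)"
    using windowed_partition_ray[OF x] B Ray unfolding windowed_partition_def by auto
  define s where "s = (if x = first_heavy then 1 else 0 :: nat)"
  have "B \<subseteq> (\<Union>k\<in>{i - s..(i - s) + n}. cluster (ray x k))"
  proof
    fix y assume y: "y \<in> B"
    then have "y \<in> (\<Union>k\<in>{i..i+n}. ray_seq x k)" by (rule subsetD[OF i])
    then obtain k where k: "i \<le> k" "k \<le> i + n" "y \<in> ray_seq x k" by auto
    then have "y \<in> cluster (ray x (k - s))" using ray_seq_subset[of x k] avoid y unfolding s_def by auto
    moreover have "i - s \<le> k - s" "k - s \<le> (i - s) + n" using k by auto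
    ultimately show "y \<in> (\<Union>k\<in>{i - s..(i - s) + n}. cluster (ray x k))" by auto
  qed
  then show ?thesis using anchored_ray_window ray_start_heavy[OF x] by blast
qed

theorem exists_anchored_partition:
  "\<exists>P. disjoint P \<and> \<Union>P = V \<and> (\<forall>B\<in>P. card B = n) \<and> (\<exists>B\<in>P. Q \<subseteq> B) \<and>
       finite {B\<in>P. \<not> anchored (2 * n) B}"
proof (intro exI[of _ "\<Union>r\<in>regions. region_blocks r"] conjI)
  let ?P = "\<Union>r\<in>regions. region_blocks r"
  have "disjoint_family_on (\<lambda>r. \<Union>(region_blocks r)) regions"
    unfolding disjoint_family_on_def using region_set_disjoint region_blocks_partition(2) by simp
  with region_blocks_partition(1) show dj: "disjoint ?P" by (rule disjoint_UN)
  have "\<Union>?P = (\<Union>r\<in>regions. \<Union>(region_blocks r))" by blast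
  also have "\<dots> = V" using UN_region_set region_blocks_partition(2) by simp
  finally show "\<Union>?P = V" .
  show "\<forall>B\<in>?P. card B = n" using region_blocks_partition(3) by blast
  have "card (ray_seq first_heavy 0) \<le> n" using card_roots_le by (simp add: ray_seq_def)
  then obtain B where "B \<in> region_blocks (Ray first_heavy)" "ray_seq first_heavy 0 \<subseteq> B"
    using windowed_partition_ray[OF first_heavy_ray_start] unfolding windowed_partition_def by blast
  moreover have "Ray first_heavy \<in> regions" using first_heavy_ray_start unfolding regions_def by blast
  ultimately show "\<exists>B\<in>?P. Q \<subseteq> B" by (auto simp: ray_seq_def)
  have "{B\<in>?P. \<not> anchored (2 * n) B} \<subseteq> {B\<in>?P. B \<inter> (Q \<union> root_leftover) \<noteq> {}}"
    using anchored_region_block by blast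
  moreover have "finite {B\<in>?P. B \<inter> (Q \<union> root_leftover) \<noteq> {}}"
    using finite_disjoint_meeting[OF dj] finite_roots finite_root_leftover by blast
  ultimately show "finite {B\<in>?P. \<not> anchored (2 * n) B}" by (rule finite_subset)
qed

end

context group begin

lemma m_inv_cancel_left: "x \<in> carrier G \<Longrightarrow> y \<in> carrier G \<Longrightarrow> x \<otimes> (inv x \<otimes> y) = y"
  by (simp add: m_assoc[symmetric])

lemma card_l_coset:
  assumes "M \<subseteq> carrier G" "a \<in> carrier G"
  shows "card (a <# M) = card M"
proof -
  have "a <# M = (\<otimes>) a ` M" unfolding l_coset_def by auto
  moreover have "inj_on ((\<otimes>) a) M" using inj_on_cmult[OF assms(2)] assms(1) by (rule inj_on_subset)
  ultimately show ?thesis by (simp add: card_image)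
qed

lemma l_coset_recentre:
  "B \<subseteq> carrier G \<Longrightarrow> c \<in> carrier G \<Longrightarrow> g \<in> carrier G \<Longrightarrow> (g \<otimes> c) <# (inv c <# B) = g <# B"
  by (simp add: lcos_m_assoc m_assoc)

lemma exists_left_transversal:
  assumes H: "subgroup H G"
  shows "\<exists>R\<subseteq>carrier G. (\<forall>x\<in>carrier G. \<exists>g\<in>R. \<exists>h\<in>H. x = g \<otimes> h) \<and>
    (\<forall>g\<in>R. \<forall>g'\<in>R. \<forall>h\<in>H. \<forall>h'\<in>H. g \<otimes> h = g' \<otimes> h' \<longrightarrow> g = g')"
proof -
  define rep where "rep x = (SOME g. g \<in> x <# H)" for x
  have rep_in: "rep x \<in> x <# H" if "x \<in> carrier G" for x
    unfolding rep_def using lcos_self[OF that H] by (rule someI)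
  have repG: "rep x \<in> carrier G" if "x \<in> carrier G" for x
    using l_coset_carrier[OF rep_in[OF that] that H] .
  have rep_cos: "rep x <# H = x <# H" if "x \<in> carrier G" for x
    using l_repr_independence[OF rep_in[OF that] that H] by simp
  show ?thesis
  proof (intro exI[of _ "rep ` carrier G"] conjI ballI impI)
    show "rep ` carrier G \<subseteq> carrier G" using repG by auto
  next
    fix x assume x: "x \<in> carrier G"
    then have "x \<in> rep x <# H" using rep_cos lcos_self[OF x H] by simp
    then show "\<exists>g\<in>rep ` carrier G. \<exists>h\<in>H. x = g \<otimes> h" unfolding l_coset_def using x by blast
  next
    fix g g' h h' assume g: "g \<in> rep ` carrier G" "g' \<in> rep ` carrier G" and h: "h \<in> H" "h' \<in> H"
      and eq: "g \<otimes> h = g' \<otimes> h'"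
    obtain x x' where x: "x \<in> carrier G" "g = rep x" "x' \<in> carrier G" "g' = rep x'" using g by auto
    have "g \<otimes> h \<in> x <# H" "g' \<otimes> h' \<in> x' <# H"
      using rep_cos x h unfolding l_coset_def by blast+
    then have "x <# H = (g \<otimes> h) <# H" "x' <# H = (g' \<otimes> h') <# H"
      using l_repr_independence[OF _ x(1) H] l_repr_independence[OF _ x(3) H] by blast+
    then have "x <# H = x' <# H" using eq by simp
    then show "g = g'" unfolding x(2,4) rep_def by simp
  qed
qed

lemma polytile_if_tiling:
  assumes Ts: "Ts \<noteq> []" "distinct Ts" "\<forall>T\<in>set Ts. finite T \<and> T \<subseteq> carrier G \<and> \<one> \<in> T"
    and tiles: "D \<subseteq> carrier G \<times> set Ts" "snd ` D = set Ts"
    and cover: "(\<Union>(\<delta>, T)\<in>D. \<delta> <# T) = carrier G"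
    and disj: "\<And>\<delta> T \<delta>' T'. (\<delta>, T) \<in> D \<Longrightarrow> (\<delta>', T') \<in> D \<Longrightarrow> (\<delta>, T) \<noteq> (\<delta>', T') \<Longrightarrow>
      (\<delta> <# T) \<inter> (\<delta>' <# T') = {}"
  shows "polytile G Ts"
  unfolding polytile_def
proof (intro conjI exI[of _ "\<lambda>i. {\<delta>. (\<delta>, Ts ! i) \<in> D}"] allI impI ballI)
  fix i assume "i < length Ts"
  then have "Ts ! i \<in> snd ` D" using tiles(2) by simp
  then show "{\<delta>. (\<delta>, Ts ! i) \<in> D} \<noteq> {}" by force
  show "{\<delta>. (\<delta>, Ts ! i) \<in> D} \<subseteq> carrier G" using tiles(1) by auto
next
  have "(\<Union>i<length Ts. \<Union>\<delta>\<in>{\<delta>. (\<delta>, Ts ! i) \<in> D}. \<delta> <# Ts ! i) = (\<Union>(\<delta>, T)\<in>D. \<delta> <# T)"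
    using tiles(1) by (fastforce simp: in_set_conv_nth)
  then show "(\<Union>i<length Ts. \<Union>\<delta>\<in>{\<delta>. (\<delta>, Ts ! i) \<in> D}. l_coset G \<delta> (Ts ! i)) = carrier G"
    using cover by simp
next
  fix i j \<delta> \<delta>' assume "i < length Ts" "j < length Ts" "\<delta> \<in> {\<delta>. (\<delta>, Ts ! i) \<in> D}"
    "\<delta>' \<in> {\<delta>. (\<delta>, Ts ! j) \<in> D}" "(i, \<delta>) \<noteq> (j, \<delta>')"
  then show "l_coset G \<delta> (Ts ! i) \<inter> l_coset G \<delta>' (Ts ! j) = {}"
    using disj Ts(2) nth_eq_iff_index_eq by fastforce
qed (use Ts in auto)

lemma translates_tile_carrier:
  assumes H: "subgroup H G" and P: "disjoint P" "\<Union>P = H"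
  shows "\<exists>R\<subseteq>carrier G. R \<noteq> {} \<and> (\<Union>g\<in>R. \<Union>B\<in>P. g <# B) = carrier G \<and>
    (\<forall>g\<in>R. \<forall>g'\<in>R. \<forall>B\<in>P. \<forall>B'\<in>P. (g <# B) \<inter> (g' <# B') \<noteq> {} \<longrightarrow> g = g' \<and> B = B')"
proof -
  have HG: "H \<subseteq> carrier G" using subgroup.subset[OF H] .
  obtain R where R: "R \<subseteq> carrier G" "\<forall>x\<in>carrier G. \<exists>g\<in>R. \<exists>h\<in>H. x = g \<otimes> h"
    "\<forall>g\<in>R. \<forall>g'\<in>R. \<forall>h\<in>H. \<forall>h'\<in>H. g \<otimes> h = g' \<otimes> h' \<longrightarrow> g = g'"
    using exists_left_transversal[OF H] by blast
  have "R \<noteq> {}" using R(2) one_closed by blast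
  moreover have "(\<Union>g\<in>R. \<Union>B\<in>P. g <# B) = carrier G"
  proof
    show "(\<Union>g\<in>R. \<Union>B\<in>P. g <# B) \<subseteq> carrier G"
    proof (intro UN_least)
      fix g B assume "g \<in> R" "B \<in> P"
      then have "B \<subseteq> carrier G" "g \<in> carrier G" using R(1) P(2) HG by auto
      then show "g <# B \<subseteq> carrier G" by (rule l_coset_subset_G)
    qed
    show "carrier G \<subseteq> (\<Union>g\<in>R. \<Union>B\<in>P. g <# B)"
    proof
      fix x assume "x \<in> carrier G"
      then obtain g h where gh: "g \<in> R" "h \<in> H" "x = g \<otimes> h" using R(2) by blast
      then obtain B where "B \<in> P" "h \<in> B" using P(2) by blast
      then show "x \<in> (\<Union>g\<in>R. \<Union>B\<in>P. g <# B)" using gh unfolding l_coset_def by blast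
    qed
  qed
  moreover have "\<forall>g\<in>R. \<forall>g'\<in>R. \<forall>B\<in>P. \<forall>B'\<in>P. (g <# B) \<inter> (g' <# B') \<noteq> {} \<longrightarrow> g = g' \<and> B = B'"
  proof (intro ballI impI)
    fix g g' B B' assume g: "g \<in> R" "g' \<in> R" and B: "B \<in> P" "B' \<in> P"
      and "(g <# B) \<inter> (g' <# B') \<noteq> {}"
    then obtain b b' where b: "b \<in> B" "b' \<in> B'" "g \<otimes> b = g' \<otimes> b'" unfolding l_coset_def by auto
    have bH: "b \<in> H" "b' \<in> H" using b B P(2) by auto
    then have "g = g'" using R(3) g b(3) by blast
    then have "b = b'" using b(3) bH R(1) g(1) HG by (meson l_cancel subsetD)
    then have "B = B'" using P(1) b B unfolding disjoint_def by blast
    then show "g = g' \<and> B = B'" using \<open>g = g'\<close> by simp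
  qed
  ultimately show ?thesis using R(1) by blast
qed

lemma fair_polytile_from_partition:
  assumes H: "subgroup H G" and n: "1 \<le> n"
    and P: "disjoint P" "\<Union>P = H" "\<And>B. B \<in> P \<Longrightarrow> card B = n"
    and ctr: "\<And>B. B \<in> P \<Longrightarrow> ctr B \<in> B"
    and shapes: "finite ((\<lambda>B. inv (ctr B) <# B) ` P)"
    and B0: "B0 \<in> P" "ctr B0 = \<one>"
  shows "\<exists>Ts. polytile G Ts \<and> fair Ts \<and> Ts ! 0 = B0"
proof -
  define shape where "shape B = inv (ctr B) <# B" for B
  have BG: "B \<subseteq> carrier G" if "B \<in> P" for B using that P(2) subgroup.subset[OF H] by blast
  have cG: "ctr B \<in> carrier G" if "B \<in> P" for B using ctr[OF that] BG[OF that] by blast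
  have card_shape: "card (shape B) = n" if "B \<in> P" for B
    unfolding shape_def using card_l_coset[OF BG[OF that]] cG[OF that] P(3)[OF that] by simp
  have shape_ok: "finite (shape B) \<and> shape B \<subseteq> carrier G \<and> \<one> \<in> shape B" if "B \<in> P" for B
    using card_shape[OF that] n l_coset_subset_G[OF BG[OF that]] cG[OF that] ctr[OF that]
    unfolding shape_def l_coset_def by (force intro: card_ge_0_finite)
  have translate: "(g \<otimes> ctr B) <# shape B = g <# B" if "B \<in> P" "g \<in> carrier G" for B g
    unfolding shape_def using l_coset_recentre BG cG that by blast
  have "B0 \<in> shape ` P" using B0 lcos_mult_one[OF BG[OF B0(1)]] unfolding shape_def by force
  moreover have "finite (shape ` P - {B0})" using shapes unfolding shape_def by simp
  then obtain l where l: "set l = shape ` P - {B0}" "distinct l" using finite_distinct_list by blast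
  ultimately have setTs: "set (B0 # l) = shape ` P" and distTs: "distinct (B0 # l)" by auto
  obtain R where R: "R \<subseteq> carrier G" "R \<noteq> {}" "(\<Union>g\<in>R. \<Union>B\<in>P. g <# B) = carrier G"
    "\<forall>g\<in>R. \<forall>g'\<in>R. \<forall>B\<in>P. \<forall>B'\<in>P. (g <# B) \<inter> (g' <# B') \<noteq> {} \<longrightarrow> g = g' \<and> B = B'"
    using translates_tile_carrier[OF H P(1,2)] by (elim exE conjE) (rule that)
  define D where "D = (\<lambda>(g, B). (g \<otimes> ctr B, shape B)) ` (R \<times> P)"
  have "(\<Union>(\<delta>, T)\<in>D. \<delta> <# T) = (\<Union>(g, B)\<in>R \<times> P. (g \<otimes> ctr B) <# shape B)"
    unfolding D_def by auto
  also have "\<dots> = (\<Union>(g, B)\<in>R \<times> P. g <# B)" using translate R(1) by (intro SUP_cong) auto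
  finally have D_translate: "(\<Union>(\<delta>, T)\<in>D. \<delta> <# T) = (\<Union>g\<in>R. \<Union>B\<in>P. g <# B)" by blast
  have "polytile G (B0 # l)"
  proof (rule polytile_if_tiling[OF _ distTs, of D])
    show "\<forall>T\<in>set (B0 # l). finite T \<and> T \<subseteq> carrier G \<and> \<one> \<in> T" using setTs shape_ok by auto
    show "D \<subseteq> carrier G \<times> set (B0 # l)" unfolding D_def setTs using R(1) cG by auto
    obtain g0 where "g0 \<in> R" using R(2) by blast
    then have "shape B \<in> snd ` D" if "B \<in> P" for B
      using that by (intro image_eqI[of _ snd "(g0 \<otimes> ctr B, shape B)"]) (auto simp: D_def)
    then show "snd ` D = set (B0 # l)" unfolding setTs by (auto simp: D_def)
    show "(\<Union>(\<delta>, T)\<in>D. \<delta> <# T) = carrier G" using D_translate R(3) by simp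
    fix \<delta> T \<delta>' T' assume "(\<delta>, T) \<in> D" "(\<delta>', T') \<in> D" and ne: "(\<delta>, T) \<noteq> (\<delta>', T')"
    then obtain g B g' B' where gB: "g \<in> R" "B \<in> P" "\<delta> = g \<otimes> ctr B" "T = shape B"
      and gB': "g' \<in> R" "B' \<in> P" "\<delta>' = g' \<otimes> ctr B'" "T' = shape B'"
      unfolding D_def by auto
    have "g \<in> carrier G" "g' \<in> carrier G" using gB(1) gB'(1) R(1) by blast+
    then have "\<delta> <# T = g <# B" "\<delta>' <# T' = g' <# B'" using translate gB gB' by simp_all
    moreover have "\<not> (g = g' \<and> B = B')" using ne gB gB' by auto
    ultimately show "(\<delta> <# T) \<inter> (\<delta>' <# T') = {}" using R(4) gB(1,2) gB'(1,2) by metis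
  qed simp
  moreover have "fair (B0 # l)" unfolding fair_def using setTs card_shape by auto
  ultimately show ?thesis by (intro exI[of _ "B0 # l"]) simp
qed

end

primrec word_ball :: "('a, 'b) monoid_scheme \<Rightarrow> 'a set \<Rightarrow> nat \<Rightarrow> 'a set" where
  "word_ball G S 0 = {\<one>\<^bsub>G\<^esub>}"
| "word_ball G S (Suc k) = {a \<otimes>\<^bsub>G\<^esub> s | a s. a \<in> word_ball G S k \<and> s \<in> S}"

locale symmetric_generators = group G for G (structure) +
  fixes S :: "'a set"
  assumes gens_subset: "S \<subseteq> carrier G" and finite_gens: "finite S"
    and one_in_gens: "\<one> \<in> S" and inv_in_gens: "s \<in> S \<Longrightarrow> inv s \<in> S"
begin

lemma word_ball_carrier: "word_ball G S k \<subseteq> carrier G"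
  using gens_subset by (induction k) auto

lemma finite_word_ball: "finite (word_ball G S k)"
proof (induction k)
  case (Suc k)
  have "word_ball G S (Suc k) = (\<lambda>(a, s). a \<otimes> s) ` (word_ball G S k \<times> S)" by auto
  then show ?case using Suc finite_gens by simp
qed simp

lemma word_ball_mult:
  assumes "a \<in> word_ball G S i"
  shows "b \<in> word_ball G S j \<Longrightarrow> a \<otimes> b \<in> word_ball G S (i + j)"
proof (induction j arbitrary: b)
  case 0
  have "a \<in> carrier G" using assms word_ball_carrier by blast
  then show ?case using 0 assms by simp
next
  case (Suc j)
  obtain b' s where b: "b = b' \<otimes> s" "b' \<in> word_ball G S j" "s \<in> S" using Suc.prems by auto
  have "a \<otimes> b = (a \<otimes> b') \<otimes> s"
    using b assms word_ball_carrier gens_subset by (simp add: m_assoc subset_iff)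
  then show ?case using Suc.IH b by auto
qed

lemma gens_in_word_ball: "s \<in> S \<Longrightarrow> s \<in> word_ball G S 1"
  using gens_subset by force

lemma one_in_word_ball: "\<one> \<in> word_ball G S k"
proof (induction k)
  case (Suc k)
  have "\<one> = \<one> \<otimes> \<one>" by simp
  then show ?case using Suc one_in_gens by force
qed simp

lemma word_ball_mono:
  assumes "i \<le> j" "a \<in> word_ball G S i"
  shows "a \<in> word_ball G S j"
proof -
  have "a \<otimes> \<one> \<in> word_ball G S (i + (j - i))" using word_ball_mult[OF assms(2) one_in_word_ball] .
  moreover have "a \<in> carrier G" using assms(2) word_ball_carrier by blast
  ultimately show ?thesis using assms(1) by simp
qed

lemma inv_word_ball: "a \<in> word_ball G S k \<Longrightarrow> inv a \<in> word_ball G S k"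
proof (induction k arbitrary: a)
  case (Suc k)
  obtain a' s where a: "a = a' \<otimes> s" "a' \<in> word_ball G S k" "s \<in> S" using Suc.prems by auto
  have "a' \<in> carrier G" "s \<in> carrier G" using a word_ball_carrier gens_subset by blast+
  then have "inv a = inv s \<otimes> inv a'" using a(1) by (simp add: inv_mult_group)
  moreover have "inv s \<otimes> inv a' \<in> word_ball G S (1 + k)"
    using word_ball_mult[OF gens_in_word_ball[OF inv_in_gens[OF a(3)]] Suc.IH[OF a(2)]] .
  ultimately show ?case by simp
qed simp

lemma word_ball_subset_generate: "word_ball G S k \<subseteq> generate G S"
proof (induction k)
  case (Suc k)
  show ?case
  proof
    fix x assume "x \<in> word_ball G S (Suc k)"
    then obtain a s where x: "x = a \<otimes> s" "a \<in> word_ball G S k" "s \<in> S" by auto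
    have "a \<in> generate G S" using Suc x(2) by blast
    moreover have "s \<in> generate G S" using x(3) by (rule generate.incl)
    ultimately show "x \<in> generate G S" unfolding x(1) by (rule generate.eng)
  qed
qed (simp add: generate.one)

lemma generate_in_word_ball: "x \<in> generate G S \<Longrightarrow> \<exists>k. x \<in> word_ball G S k"
proof (induction rule: generate.induct)
  case one
  then show ?case using one_in_word_ball by blast
next
  case (eng h1 h2)
  then show ?case using word_ball_mult by blast
qed (use gens_in_word_ball inv_in_gens in blast)+

lemma generate_subset_carrier: "generate G S \<subseteq> carrier G"
  using generate_incl[OF gens_subset] .

definition word_dist :: "'a set \<Rightarrow> 'a \<Rightarrow> nat" where
  "word_dist Q x = (LEAST k. \<exists>q\<in>Q. inv q \<otimes> x \<in> word_ball G S k)"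

definition word_parent :: "'a set \<Rightarrow> 'a \<Rightarrow> 'a" where
  "word_parent Q x = (if x \<in> Q then x
     else SOME y. y \<in> generate G S \<and> inv x \<otimes> y \<in> S \<and> Suc (word_dist Q y) = word_dist Q x)"

context
  fixes Q :: "'a set"
  assumes roots_generate: "Q \<subseteq> generate G S" and roots_nonempty: "Q \<noteq> {}"
begin

lemma word_dist_attained:
  assumes "x \<in> generate G S"
  shows "\<exists>q\<in>Q. inv q \<otimes> x \<in> word_ball G S (word_dist Q x)"
proof -
  obtain q where q: "q \<in> Q" using roots_nonempty by blast
  then have "inv q \<otimes> x \<in> generate G S"
    using roots_generate assms subgroup.m_closed[OF generate_is_subgroup[OF gens_subset]]
      subgroup.m_inv_closed[OF generate_is_subgroup[OF gens_subset]]
    by (metis m_inv_def subsetD)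
  then obtain k where "inv q \<otimes> x \<in> word_ball G S k" using generate_in_word_ball by blast
  then have "\<exists>k. \<exists>q\<in>Q. inv q \<otimes> x \<in> word_ball G S k" using q by blast
  then show ?thesis unfolding word_dist_def by (rule LeastI_ex)
qed

lemma word_dist_le: "q \<in> Q \<Longrightarrow> inv q \<otimes> x \<in> word_ball G S k \<Longrightarrow> word_dist Q x \<le> k"
  unfolding word_dist_def by (rule Least_le) blast

lemma word_dist_eq_0_iff:
  assumes "x \<in> generate G S"
  shows "word_dist Q x = 0 \<longleftrightarrow> x \<in> Q"
proof
  have xG: "x \<in> carrier G" using assms generate_subset_carrier by blast
  assume "word_dist Q x = 0"
  then obtain q where q: "q \<in> Q" "inv q \<otimes> x = \<one>" using word_dist_attained[OF assms] by auto
  have "q \<in> carrier G" using q roots_generate generate_subset_carrier by blast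
  then have "x = q" using q(2) xG inv_solve_left' by fastforce
  then show "x \<in> Q" using q by simp
next
  assume xQ: "x \<in> Q"
  have "inv x \<otimes> x \<in> word_ball G S 0" using xQ roots_generate generate_subset_carrier by auto
  then show "word_dist Q x = 0" using word_dist_le[OF xQ] by fastforce
qed

lemma word_dist_step:
  assumes x: "x \<in> generate G S" "x \<notin> Q"
  shows "\<exists>y\<in>generate G S. inv x \<otimes> y \<in> S \<and> Suc (word_dist Q y) = word_dist Q x"
proof -
  have HG: "generate G S \<subseteq> carrier G" by (rule generate_subset_carrier)
  have xG: "x \<in> carrier G" using x HG by blast
  obtain q where q: "q \<in> Q" "inv q \<otimes> x \<in> word_ball G S (word_dist Q x)"
    using word_dist_attained[OF x(1)] by blast
  have qG: "q \<in> carrier G" using q roots_generate HG by blast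
  obtain m where m: "word_dist Q x = Suc m" using word_dist_eq_0_iff[OF x(1)] x(2) by (cases "word_dist Q x") auto
  obtain a s where as: "inv q \<otimes> x = a \<otimes> s" "a \<in> word_ball G S m" "s \<in> S" using q(2) m by auto
  have aG: "a \<in> carrier G" and sG: "s \<in> carrier G" using as word_ball_carrier gens_subset by blast+
  define y where "y = q \<otimes> a"
  have yG: "y \<in> carrier G" unfolding y_def using qG aG by simp
  have yH: "y \<in> generate G S" unfolding y_def
    using subgroup.m_closed[OF generate_is_subgroup[OF gens_subset]] roots_generate q(1)
      word_ball_subset_generate as(2) by blast
  have xy: "x = y \<otimes> s" using as(1) qG aG sG xG unfolding y_def by (metis inv_solve_left' m_assoc m_closed)
  have "inv q \<otimes> y = a" unfolding y_def using qG aG by (simp add: m_assoc[symmetric])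
  then have "word_dist Q y \<le> m" using word_dist_le[OF q(1)] as(2) by simp
  moreover have "word_dist Q x \<le> Suc (word_dist Q y)"
  proof -
    obtain q' where q': "q' \<in> Q" "inv q' \<otimes> y \<in> word_ball G S (word_dist Q y)"
      using word_dist_attained[OF yH] by blast
    have "q' \<in> carrier G" using q' roots_generate HG by blast
    then have "inv q' \<otimes> x = (inv q' \<otimes> y) \<otimes> s" using xy yG sG by (simp add: m_assoc)
    then have "inv q' \<otimes> x \<in> word_ball G S (Suc (word_dist Q y))" using q'(2) as(3) by auto
    then show ?thesis using word_dist_le[OF q'(1)] by blast
  qed
  moreover have "inv x \<otimes> y = inv s" using xy yG sG by (simp add: inv_mult_group m_assoc)
  ultimately show ?thesis using yH inv_in_gens[OF as(3)] m by (intro bexI[of _ y]) auto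
qed

lemma word_parent:
  assumes "x \<in> generate G S"
  shows "word_parent Q x \<in> generate G S" "inv x \<otimes> word_parent Q x \<in> S"
    and "x \<notin> Q \<Longrightarrow> Suc (word_dist Q (word_parent Q x)) = word_dist Q x"
proof -
  have "word_parent Q x \<in> generate G S \<and> inv x \<otimes> word_parent Q x \<in> S \<and>
      (x \<notin> Q \<longrightarrow> Suc (word_dist Q (word_parent Q x)) = word_dist Q x)"
  proof (cases "x \<in> Q")
    case True
    then show ?thesis using assms generate_subset_carrier one_in_gens unfolding word_parent_def by auto
  next
    case False
    then show ?thesis
      using someI_ex[OF word_dist_step[OF assms False, unfolded Bex_def]] unfolding word_parent_def by simp
  qed
  then show "word_parent Q x \<in> generate G S" "inv x \<otimes> word_parent Q x \<in> S"
    "x \<notin> Q \<Longrightarrow> Suc (word_dist Q (word_parent Q x)) = word_dist Q x" by simp_all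
qed

lemma rooted_forest_word:
  assumes "finite Q" "infinite (generate G S)"
  shows "rooted_forest (generate G S) Q (word_parent Q) (word_dist Q)"
proof
  fix v assume v: "v \<in> generate G S"
  have "{x \<in> generate G S. word_parent Q x = v} \<subseteq> Q \<union> (\<lambda>s. v \<otimes> inv s) ` S"
  proof
    fix x assume x: "x \<in> {x \<in> generate G S. word_parent Q x = v}"
    show "x \<in> Q \<union> (\<lambda>s. v \<otimes> inv s) ` S"
    proof (cases "x \<in> Q")
      case False
      have s: "inv x \<otimes> v \<in> S" using word_parent(2) x by blast
      have "x \<in> carrier G" "v \<in> carrier G" using x v generate_subset_carrier by auto
      then have "v \<otimes> inv (inv x \<otimes> v) = x" by (simp add: inv_mult_group m_assoc[symmetric])
      then show ?thesis using s by (metis UnI2 image_eqI)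
    qed simp
  qed
  then show "finite {x \<in> generate G S. word_parent Q x = v}"
    using assms(1) finite_gens finite_subset by blast
qed (use assms roots_generate word_parent word_dist_eq_0_iff in \<open>auto simp: word_parent_def\<close>)

lemma iter_word_parent:
  assumes "y \<in> generate G S"
  shows "(word_parent Q ^^ i) y \<in> generate G S \<and> inv ((word_parent Q ^^ i) y) \<otimes> y \<in> word_ball G S i"
proof (induction i)
  case 0
  then show ?case using assms generate_subset_carrier by auto
next
  case (Suc i)
  define z where "z = (word_parent Q ^^ i) y"
  have zH: "z \<in> generate G S" and zw: "inv z \<otimes> y \<in> word_ball G S i" using Suc.IH unfolding z_def by blast+
  have pz: "word_parent Q z \<in> generate G S" "inv z \<otimes> word_parent Q z \<in> S" using word_parent[OF zH] by blast+
  have G: "z \<in> carrier G" "y \<in> carrier G" "word_parent Q z \<in> carrier G"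
    using zH assms pz(1) generate_subset_carrier by blast+
  then have "inv (word_parent Q z) \<otimes> y = inv (inv z \<otimes> word_parent Q z) \<otimes> (inv z \<otimes> y)"
    by (simp add: inv_mult_group m_assoc m_inv_cancel_left)
  moreover have "inv (inv z \<otimes> word_parent Q z) \<otimes> (inv z \<otimes> y) \<in> word_ball G S (1 + i)"
    using word_ball_mult[OF gens_in_word_ball[OF inv_in_gens[OF pz(2)]] zw] .
  ultimately show ?case using pz(1) unfolding z_def by simp
qed

lemma anchored_shape_subset:
  assumes anchor: "\<forall>y\<in>B. \<exists>i\<le>k. (word_parent Q ^^ i) y = u" and B: "B \<subseteq> generate G S" "c \<in> B"
  shows "inv c <# B \<subseteq> word_ball G S (k + k)"
proof
  have ball: "inv u \<otimes> y \<in> word_ball G S k \<and> u \<in> generate G S" if "y \<in> B" for y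
  proof -
    have "\<exists>i\<le>k. (word_parent Q ^^ i) y = u" using anchor that by simp
    then obtain i where i: "i \<le> k" "(word_parent Q ^^ i) y = u" by blast
    have "y \<in> generate G S" using B(1) that by blast
    then have "u \<in> generate G S" "inv u \<otimes> y \<in> word_ball G S i" using iter_word_parent[of y i] i(2) by auto
    then show ?thesis using word_ball_mono[OF i(1)] by blast
  qed
  fix t assume "t \<in> inv c <# B"
  then obtain y where y: "y \<in> B" "t = inv c \<otimes> y" unfolding l_coset_def by auto
  have G: "u \<in> carrier G" "c \<in> carrier G" "y \<in> carrier G"
    using ball[OF y(1)] B y(1) generate_subset_carrier by blast+
  then have "t = inv (inv u \<otimes> c) \<otimes> (inv u \<otimes> y)"
    using y(2) by (simp add: inv_mult_group m_assoc m_inv_cancel_left)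
  moreover have "inv (inv u \<otimes> c) \<in> word_ball G S k" using ball[OF B(2)] inv_word_ball by blast
  then have "inv (inv u \<otimes> c) \<otimes> (inv u \<otimes> y) \<in> word_ball G S (k + k)"
    using word_ball_mult ball[OF y(1)] by blast
  ultimately show "t \<in> word_ball G S (k + k)" by simp
qed

lemma finite_shapes:
  assumes P: "\<And>B. B \<in> P \<Longrightarrow> B \<subseteq> generate G S" and ctr: "\<And>B. B \<in> P \<Longrightarrow> ctr B \<in> B"
    and exceptional: "finite {B\<in>P. \<not> (\<exists>u. \<forall>y\<in>B. \<exists>i\<le>k. (word_parent Q ^^ i) y = u)}"
  shows "finite ((\<lambda>B. inv (ctr B) <# B) ` P)"
proof -
  let ?E = "{B\<in>P. \<not> (\<exists>u. \<forall>y\<in>B. \<exists>i\<le>k. (word_parent Q ^^ i) y = u)}"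
  have "(\<lambda>B. inv (ctr B) <# B) ` P \<subseteq> Pow (word_ball G S (k + k)) \<union> (\<lambda>B. inv (ctr B) <# B) ` ?E"
  proof
    fix T assume "T \<in> (\<lambda>B. inv (ctr B) <# B) ` P"
    then obtain B where B: "B \<in> P" "T = inv (ctr B) <# B" by blast
    show "T \<in> Pow (word_ball G S (k + k)) \<union> (\<lambda>B. inv (ctr B) <# B) ` ?E"
    proof (cases "B \<in> ?E")
      case False
      then have "\<exists>u. \<forall>y\<in>B. \<exists>i\<le>k. (word_parent Q ^^ i) y = u" using B(1) by simp
      then obtain u where u: "\<forall>y\<in>B. \<exists>i\<le>k. (word_parent Q ^^ i) y = u" by (elim exE)
      then have "T \<subseteq> word_ball G S (k + k)"
        using anchored_shape_subset[OF u P[OF B(1)] ctr[OF B(1)]] B(2) by simp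
      then show ?thesis by blast
    next
      case True
      then show ?thesis using B(2) by (intro UnI2 image_eqI[where f="\<lambda>B. inv (ctr B) <# B"])
    qed
  qed
  moreover have "finite (Pow (word_ball G S (k + k)) \<union> (\<lambda>B. inv (ctr B) <# B) ` ?E)"
    using finite_word_ball exceptional by simp
  ultimately show ?thesis by (rule finite_subset)
qed

lemma fair_polytile_containing_roots:
  assumes "finite Q" "\<one> \<in> Q" "infinite (generate G S)" "card Q \<le> n"
  shows "\<exists>Ts. polytile G Ts \<and> fair Ts \<and> Q \<subseteq> Ts ! 0 \<and> card (Ts ! 0) = n"
proof -
  have "card Q \<noteq> 0" using assms(1,2) by auto
  then have n: "1 \<le> n" using assms(4) by linarith
  interpret rooted_forest "generate G S" Q "word_parent Q" "word_dist Q"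
    using rooted_forest_word assms(1,3) .
  interpret forest: rooted_forest_blocks "generate G S" Q "word_parent Q" "word_dist Q" n
    by unfold_locales (use n assms(4) roots_nonempty in simp_all)
  obtain P where P: "disjoint P" "\<Union>P = generate G S" "\<forall>B\<in>P. card B = n" "\<exists>B\<in>P. Q \<subseteq> B"
    and exceptional: "finite {B\<in>P. \<not> anchored (2 * n) B}"
    using forest.exists_anchored_partition by blast
  obtain B0 where B0: "B0 \<in> P" "Q \<subseteq> B0" using P(4) by blast
  define ctr where "ctr B = (if \<one> \<in> B then \<one> else (SOME y. y \<in> B))" for B
  have ctr: "ctr B \<in> B" if "B \<in> P" for B
    using P(3) that n unfolding ctr_def by (auto simp: some_in_eq card_gt_0_iff)
  have "finite {B\<in>P. \<not> (\<exists>u. \<forall>y\<in>B. \<exists>i\<le>2 * n. (word_parent Q ^^ i) y = u)}"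
    using exceptional unfolding anchored_def by simp
  then have "finite ((\<lambda>B. inv (ctr B) <# B) ` P)"
    using finite_shapes[OF _ ctr] P(2) by blast
  moreover have "subgroup (generate G S) G" using gens_subset by (rule generate_is_subgroup)
  moreover have "ctr B0 = \<one>" using B0 assms(2) unfolding ctr_def by auto
  ultimately obtain Ts where "polytile G Ts" "fair Ts" "Ts ! 0 = B0"
    using fair_polytile_from_partition[OF _ n P(1,2) _ ctr _ B0(1)] P(3) by blast
  then show ?thesis using B0 P(3) by auto
qed

end

end

lemma (in group) symmetric_generators_closure:
  assumes "A \<subseteq> carrier G" "finite A"
  shows "symmetric_generators G (insert \<one> (A \<union> (\<lambda>x. inv x) ` A))"
proof (unfold_locales)
  fix s assume "s \<in> insert \<one> (A \<union> (\<lambda>x. inv x) ` A)"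
  then show "inv s \<in> insert \<one> (A \<union> (\<lambda>x. inv x) ` A)" using assms(1) by auto
qed (use assms in auto)

lemma (in group) fair_polytile_containing:
  assumes S: "S \<subseteq> carrier G" "finite S" "infinite (generate G S)"
    and F: "F \<subseteq> carrier G" "finite F" and n: "card (insert \<one> F) \<le> n"
  shows "\<exists>Ts. polytile G Ts \<and> fair Ts \<and> F \<subseteq> Ts ! 0 \<and> card (Ts ! 0) = n"
proof -
  define S' where "S' = insert \<one> ((S \<union> F) \<union> (\<lambda>x. inv x) ` (S \<union> F))"
  have "S \<union> F \<subseteq> carrier G" "finite (S \<union> F)" using S F by auto
  then interpret gens: symmetric_generators G S'
    unfolding S'_def by (rule symmetric_generators_closure)
  have "generate G S \<subseteq> generate G S'" unfolding S'_def by (intro mono_generate) blast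
  then have inf: "infinite (generate G S')" using S(3) finite_subset by blast
  have sub: "insert \<one> F \<subseteq> generate G S'"
  proof
    fix x assume "x \<in> insert \<one> F"
    then have "x = \<one> \<or> x \<in> S'" unfolding S'_def by blast
    then show "x \<in> generate G S'" using generate.one generate.incl[of x S' G] by blast
  qed
  have "finite (insert \<one> F)" using F(2) by simp
  then obtain Ts where "polytile G Ts" "fair Ts" "insert \<one> F \<subseteq> Ts ! 0" "card (Ts ! 0) = n"
    using gens.fair_polytile_containing_roots[OF sub insert_not_empty _ insertI1 inf n] by blast
  then show ?thesis by blast
qed

theorem theorem6p5:
  fixes G :: "('a, 'b) monoid_scheme"
  assumes "group G"
    and "countable (carrier G)"
    and "\<not> locally_finite_group G"
  shows "(\<forall>n::nat. n \<ge> 1 \<longrightarrow>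
            (\<exists>Ts. polytile G Ts \<and> fair Ts \<and> card (Ts ! 0) = n))
       \<and> (\<forall>F. F \<subseteq> carrier G \<and> finite F \<longrightarrow>
            (\<exists>N. \<forall>n\<ge>N. \<exists>Ts. polytile G Ts \<and> fair Ts \<and> F \<subseteq> Ts ! 0 \<and> card (Ts ! 0) = n))"
proof -
  interpret group G by (rule assms(1))
  obtain S where S: "S \<subseteq> carrier G" "finite S" "infinite (generate G S)"
    using assms(3) unfolding locally_finite_group_def by blast
  show ?thesis
  proof (intro conjI allI impI)
    fix n :: nat assume "n \<ge> 1"
    then show "\<exists>Ts. polytile G Ts \<and> fair Ts \<and> card (Ts ! 0) = n"
      using fair_polytile_containing[OF S, of "{}" n] by auto
  next
    fix F assume "F \<subseteq> carrier G \<and> finite F"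
    then show "\<exists>N. \<forall>n\<ge>N. \<exists>Ts. polytile G Ts \<and> fair Ts \<and> F \<subseteq> Ts ! 0 \<and> card (Ts ! 0) = n"
      using fair_polytile_containing[OF S] by blast
  qed
qed

end
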